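(* Let $n\geq 1$ and let $k_1,\ldots,k_n\geq 1$ be integers, not all equal to $1$; put $k=k_1+\cdots+k_n$. Then, as polynomials in $t$, \[\sum_{l=1}^n\sum_{j=1}^{k_l-1}\zeta^t(k_l+1-j,k_{l+1},\ldots,k_n,k_1,\ldots,k_{l-1},j) =(1-t)\sum_{l=1}^n\zeta^t(k_l+1,k_{l+1},\ldots,k_n,k_1,\ldots,k_{l-1})+t^n k\,\zeta(k+1).\]
   Context: For integers $k_1\geq 2$, $k_2,\ldots,k_m\geq 1$, the multiple zeta value is $\zeta(k_1,\ldots,k_m)=\sum_{m_1>\cdots>m_m>0}m_1^{-k_1}\cdots m_m^{-k_m}$. For such an index, let $\mathbf{p}$ run over all indices of the form $(k_1\square k_2\square\cdots\square k_m)$ where each $\square$ is filled by a comma or a plus sign (plus meaning adjacent entries are added), and let $\sigma(\mathbf{p})$ be the number of plus signs. Define $\zeta^t(k_1,\ldots,k_m)=\sum_{\mathbf{p}}t^{\sigma(\mathbf{p})}\zeta(\mathbf{p})\in\mathbb{R}[t]$ for an indeterminate $t$. *)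

theory Defs
  imports "HOL-Analysis.Analysis" "HOL-Computational_Algebra.Polynomial"
begin

definition mzv :: "nat list \<Rightarrow> real" where
  "mzv ks = infsum (\<lambda>ms. \<Prod>i<length ks. 1 / real (ms ! i) ^ (ks ! i))
     {ms. length ms = length ks \<and> sorted_wrt (>) ms \<and> (\<forall>m\<in>set ms. 0 < m)}"

text \<open>All indices obtained by filling each gap with a comma or a plus sign,
  paired with the number of plus signs.\<close>
fun combos :: "nat list \<Rightarrow> (nat list \<times> nat) list" where
  "combos [] = [([], 0)]"
| "combos [k] = [([k], 0)]"
| "combos (k # k' # ks) =
     concat (map (\<lambda>(p, s). [(k # p, s), ((k + hd p) # tl p, Suc s)]) (combos (k' # ks)))"

definition zeta_t :: "nat list \<Rightarrow> real poly" where
  "zeta_t ks = (\<Sum>(p, s) \<leftarrow> combos ks. monom (mzv p) s)"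

end

theory Submission
  imports Defs
begin

text \<open>
  Everything is expressed through the weighted chain kernel \<open>chain_kernel t c x y\<close>,
  the sum over chains x = m_1 >= m_2 >= ... >= m_r = y of the products of the
  m_i^(-c_i), where every equality m_i = m_(i+1) contributes a factor t.  Summing
  over y and then over x >= 1 gives the value of \<open>zeta_t c\<close> at t (for 0 <= t <= 1),
  because merging equal neighbours is exactly the plus sign in the definition of
  \<open>zeta_t\<close> (lemmas \<open>chain_sum_combos\<close>, \<open>zeta_t_as_pos_sum\<close>).

  All infinite sums are taken in \<open>ennreal\<close>, so that they may be split, swapped and
  re-indexed freely.  For an index c = (a, m) of length n and weight k we introduce
  connector sums P(c), Q(c), R(c) and show, with c' the rotation of c,
    A(c) + P(c) = Q(c) + (a - 1) t^n zeta(k+1)          (\<open>connector_A_P\<close>)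
    Q(c) = P(c') + R(c')                                (\<open>connector_Q\<close>)
    R(c') = (1 - t) zeta^t(c'_1 + 1, ...) + t^n zeta(k+1)  (\<open>connector_R\<close>)
  where A(c) is the inner sum of the left-hand side of the theorem.  Summing over
  all rotations, the P-terms cancel because they are finite (\<open>connector_P_finite\<close>);
  this gives the identity at every t in [0,1] (\<open>cyclic_sum_ennreal\<close>, \<open>cyclic_sum_at\<close>),
  and two polynomials agreeing on [0,1] are equal (\<open>poly_eq_on_unit_interval\<close>).
\<close>

section \<open>The weighted chain kernel\<close>

fun chain_kernel :: "real \<Rightarrow> nat list \<Rightarrow> nat \<Rightarrow> nat \<Rightarrow> real" where
  "chain_kernel t [] x y = 0"
| "chain_kernel t [a] x y = (if x = y then 1 / real x ^ a else 0)"
| "chain_kernel t (a # b # cs) x y =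
     1 / real x ^ a * (\<Sum>z=1..x. (if z = x then t else 1) * chain_kernel t (b # cs) z y)"

lemma chain_kernel_Cons:
  "cs \<noteq> [] \<Longrightarrow> chain_kernel t (a # cs) x y =
     1 / real x ^ a * (\<Sum>z=1..x. (if z = x then t else 1) * chain_kernel t cs z y)"
  by (cases cs) auto

text \<open>Chains are weakly decreasing, so the kernel vanishes when the end lies above the start.\<close>
lemma chain_kernel_below: "x < y \<Longrightarrow> chain_kernel t c x y = 0"
  by (induction t c x y rule: chain_kernel.induct) auto

lemma chain_kernel_nonneg: "0 \<le> t \<Longrightarrow> 0 \<le> chain_kernel t c x y"
  by (induction t c x y rule: chain_kernel.induct)
     (auto intro!: sum_nonneg mult_nonneg_nonneg divide_nonneg_nonneg)

lemma chain_kernel_add_first: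
  "chain_kernel t ((a + b) # cs) x y = 1 / real x ^ a * chain_kernel t (b # cs) x y"
  by (cases cs) (auto simp: chain_kernel_Cons power_add)

lemma chain_kernel_last:
  "chain_kernel t (cs @ [b]) x y = 1 / real y ^ b * chain_kernel t (cs @ [0]) x y"
proof (induction cs arbitrary: x)
  case Nil
  then show ?case by simp
next
  case (Cons a cs)
  have "chain_kernel t ((a # cs) @ [b]) x y
      = 1 / real x ^ a * (\<Sum>z=1..x. (if z = x then t else 1) * chain_kernel t (cs @ [b]) z y)"
    by (simp add: chain_kernel_Cons)
  also have "\<dots> = 1 / real y ^ b * (1 / real x ^ a *
      (\<Sum>z=1..x. (if z = x then t else 1) * chain_kernel t (cs @ [0]) z y))"
    by (simp add: Cons sum_distrib_left algebra_simps)
  also have "\<dots> = 1 / real y ^ b * chain_kernel t ((a # cs) @ [0]) x y"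
    by (simp add: chain_kernel_Cons)
  finally show ?case .
qed

lemma chain_kernel_ends:
  "chain_kernel t (b # m @ [e]) x y =
     1 / real x ^ b * (1 / real y ^ e * chain_kernel t (0 # m @ [0]) x y)"
  using chain_kernel_add_first[of t b 0 "m @ [e]" x y] chain_kernel_last[of t "0 # m" e x y]
  by simp

lemma sum_single_support:
  assumes "finite A" "a \<in> A" "\<And>z. z \<in> A \<Longrightarrow> z \<noteq> a \<Longrightarrow> f z = 0"
  shows "sum f A = f a"
  using assms by (subst sum.remove[of A a]) (auto intro: sum.neutral)

text \<open>The constant chain x = ... = x: all r - 1 steps are equalities.\<close>
lemma chain_kernel_diag:
  "c \<noteq> [] \<Longrightarrow> 1 \<le> x \<Longrightarrow> chain_kernel t c x x = t ^ (length c - 1) / real x ^ sum_list c"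
proof (induction c)
  case Nil
  then show ?case by simp
next
  case (Cons a cs)
  show ?case
  proof (cases "cs = []")
    case True
    then show ?thesis by simp
  next
    case False
    have "(\<Sum>z=1..x. (if z = x then t else 1) * chain_kernel t cs z x) = t * chain_kernel t cs x x"
      using Cons.prems by (subst sum_single_support[where a=x]) (auto simp: chain_kernel_below)
    then show ?thesis using Cons False
      by (cases cs) (simp_all add: chain_kernel_Cons power_add field_simps)
  qed
qed

lemma chain_kernel_snoc_zero:
  assumes "cs \<noteq> []" "1 \<le> y"
  shows "chain_kernel t (cs @ [0]) x y =
           (\<Sum>z=y..x. (if z = y then t else 1) * chain_kernel t cs x z)"
  using assms(1)
proof (induction cs arbitrary: x)
  case Nil
  then show ?case by simp
next
  case (Cons a cs)
  show ?case
  proof (cases "cs = []")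
    case True
    have "chain_kernel t [a, 0] x y
        = 1 / real x ^ a * (\<Sum>z=1..x. (if z = y then (if z = x then t else 1) / real z ^ 0 else 0))"
      by (simp add: if_distrib[of "\<lambda>v. _ * v"] cong: if_cong)
    also have "\<dots> = (if y \<le> x then 1 / real x ^ a * (if y = x then t else 1) else 0)"
      using assms(2) by (simp add: sum.delta)
    also have "\<dots> = (\<Sum>z=y..x. (if x = z then (if z = y then t else 1) * (1 / real x ^ a) else 0))"
      by (simp add: sum.delta')
    also have "\<dots> = (\<Sum>z=y..x. (if z = y then t else 1) * chain_kernel t [a] x z)"
      by (intro sum.cong) auto
    finally show ?thesis using True by simp
  next
    case False
    have inner: "(\<Sum>z=y..z'. (if z = y then t else 1) * chain_kernel t cs z' z)
               = (\<Sum>z=y..x. (if z = y then t else 1) * chain_kernel t cs z' z)" if "z' \<le> x" for z'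
      using that by (intro sum.mono_neutral_left) (auto simp: chain_kernel_below)
    have "chain_kernel t ((a # cs) @ [0]) x y = 1 / real x ^ a *
        (\<Sum>z'=1..x. (if z' = x then t else 1) *
           (\<Sum>z=y..x. (if z = y then t else 1) * chain_kernel t cs z' z))"
      using Cons.IH[OF False] inner by (simp add: chain_kernel_Cons)
    also have "\<dots> = (\<Sum>z=y..x. (if z = y then t else 1) * (1 / real x ^ a *
        (\<Sum>z'=1..x. (if z' = x then t else 1) * chain_kernel t cs z' z)))"
      by (simp add: sum_distrib_left sum_distrib_right algebra_simps) (subst sum.swap, simp add: mult_ac)
    also have "\<dots> = (\<Sum>z=y..x. (if z = y then t else 1) * chain_kernel t (a # cs) x z)"
      using False by (simp add: chain_kernel_Cons)
    finally show ?thesis by simp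
  qed
qed

definition chain_sum :: "real \<Rightarrow> nat list \<Rightarrow> nat \<Rightarrow> real" where
  "chain_sum t c x = (\<Sum>y=1..x. chain_kernel t c x y)"

lemma chain_sum_nonneg: "0 \<le> t \<Longrightarrow> 0 \<le> chain_sum t c x"
  unfolding chain_sum_def by (auto intro!: sum_nonneg chain_kernel_nonneg)

lemma chain_sum_single: "1 \<le> x \<Longrightarrow> chain_sum t [a] x = 1 / real x ^ a"
  unfolding chain_sum_def by (subst sum_single_support[where a=x]) auto

lemma chain_sum_add_first:
  "chain_sum t ((a + b) # cs) x = 1 / real x ^ a * chain_sum t (b # cs) x"
  unfolding chain_sum_def by (simp add: chain_kernel_add_first sum_distrib_left)

lemma chain_sum_Cons:
  assumes "cs \<noteq> []"
  shows "chain_sum t (a # cs) x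
      = 1 / real x ^ a * (\<Sum>z=1..x. (if z = x then t else 1) * chain_sum t cs z)"
proof -
  have restrict: "(\<Sum>y=1..x. chain_kernel t cs z y) = chain_sum t cs z" if "z \<le> x" for z
    unfolding chain_sum_def using that
    by (intro sum.mono_neutral_right) (auto simp: chain_kernel_below)
  have "chain_sum t (a # cs) x =
      1 / real x ^ a * (\<Sum>z=1..x. (if z = x then t else 1) * (\<Sum>y=1..x. chain_kernel t cs z y))"
    unfolding chain_sum_def using assms
    by (simp add: chain_kernel_Cons sum_distrib_left sum_distrib_right algebra_simps) (rule sum.swap)
  also have "\<dots> = 1 / real x ^ a * (\<Sum>z=1..x. (if z = x then t else 1) * chain_sum t cs z)"
    using restrict by (intro arg_cong2[where f="(*)"] refl sum.cong) auto
  finally show ?thesis .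
qed

section \<open>Expansion of the weight t into merged indices\<close>

lemma combos_shape:
  "c \<noteq> [] \<Longrightarrow> q \<in> set (combos c) \<Longrightarrow>
    fst q \<noteq> [] \<and> hd c \<le> hd (fst q) \<and> ((\<forall>x\<in>set c. 1 \<le> x) \<longrightarrow> (\<forall>x\<in>set (fst q). 1 \<le> x))"
proof (induction c arbitrary: q rule: combos.induct)
  case 1
  then show ?case by simp
next
  case (2 k)
  then show ?case by simp
next
  case (3 k k' ks)
  have "q \<in> (\<Union>r\<in>set (combos (k' # ks)). set ((\<lambda>(p, s). [(k # p, s), ((k + hd p) # tl p, Suc s)]) r))"
    using "3.prems"(2) by (simp only: combos.simps set_concat set_map image_image)
  then obtain r where r: "r \<in> set (combos (k' # ks))"
    and qr: "q \<in> set ((\<lambda>(p, s). [(k # p, s), ((k + hd p) # tl p, Suc s)]) r)"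
    by blast
  obtain p s where rps: "r = (p, s)" by (cases r)
  have ps: "(p, s) \<in> set (combos (k' # ks))" using r rps by simp
  have q: "q = (k # p, s) \<or> q = ((k + hd p) # tl p, Suc s)" using qr rps by simp
  have p_ne: "p \<noteq> []" and p_hd: "k' \<le> hd p"
    and p_pos: "(\<forall>x\<in>set (k' # ks). 1 \<le> x) \<longrightarrow> (\<forall>x\<in>set p. 1 \<le> x)"
    using "3.IH"[OF _ ps] unfolding fst_conv list.sel(1) by blast+
  have tl_sub: "set (tl p) \<subseteq> set p" using p_ne by (cases p) auto
  have q_ne: "fst q \<noteq> []" using q by auto
  have q_hd: "hd (k # k' # ks) \<le> hd (fst q)" using q by auto
  have q_pos: "(\<forall>x\<in>set (k # k' # ks). 1 \<le> x) \<longrightarrow> (\<forall>x\<in>set (fst q). 1 \<le> x)"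
  proof
    assume "\<forall>x\<in>set (k # k' # ks). 1 \<le> x"
    then have k_pos: "1 \<le> k" and rest_pos: "\<forall>x\<in>set (k' # ks). 1 \<le> x" by auto
    from p_pos rest_pos have all_pos: "\<forall>x\<in>set p. 1 \<le> x" by (rule mp)
    show "\<forall>x\<in>set (fst q). 1 \<le> x"
    proof
      fix x assume x: "x \<in> set (fst q)"
      from q show "1 \<le> x"
      proof
        assume "q = (k # p, s)"
        then show ?thesis using x k_pos all_pos by auto
      next
        assume "q = ((k + hd p) # tl p, Suc s)"
        then have "x = k + hd p \<or> x \<in> set (tl p)" using x by auto
        then show ?thesis using k_pos all_pos tl_sub by auto
      qed
    qed
  qed
  show ?case using q_ne q_hd q_pos by blast
qed

lemma sum_list_map_scale:
  "c * (\<Sum>z\<in>Z. w z * sum_list (map (\<lambda>(p, s). (t::real) ^ s * g p z) L)) =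
   sum_list (map (\<lambda>(p, s). t ^ s * (c * (\<Sum>z\<in>Z. w z * g p z))) L)"
  by (induction L) (auto simp: sum.distrib algebra_simps sum_distrib_left)

lemma sum_list_map_combos_step:
  "sum_list (map (\<lambda>(p, s). F p s)
     (concat (map (\<lambda>(p, s). [(k # p, s), ((k + hd p) # tl p, Suc s)]) L))) =
   sum_list (map (\<lambda>(p, s). F (k # p) s + F ((k + hd p) # tl p) (Suc s)) L)"
  by (induction L) auto

text \<open>The heart of the interpolation: splitting off the equality z = x in the recursion
  for \<open>chain_sum\<close> either keeps a comma (ordinary MZV kernel, t = 0) or merges the first
  two entries with an extra factor t.\<close>
lemma chain_sum_combos:
  assumes "c \<noteq> []" "1 \<le> x"
  shows "chain_sum t c x = sum_list (map (\<lambda>(p, s). t ^ s * chain_sum 0 p x) (combos c))"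
  using assms
proof (induction c arbitrary: x rule: combos.induct)
  case (2 k)
  then show ?case using chain_sum_single[of x _ k] by simp
next
  case (3 k k' ks)
  let ?L = "combos (k' # ks)"
  have step: "1 / real x ^ k * (\<Sum>z=1..x. (if z = x then t else 1) * chain_sum 0 p z)
      = chain_sum 0 (k # p) x + t * chain_sum 0 ((k + hd p) # tl p) x" if "p \<noteq> []" for p
  proof -
    have "(\<Sum>z=1..x. (if z = x then t else 1) * chain_sum 0 p z)
        = (\<Sum>z=1..x. (if z = x then t * chain_sum 0 p z else 0) + (if z = x then 0 else 1) * chain_sum 0 p z)"
      by (intro sum.cong) auto
    also have "\<dots> = t * chain_sum 0 p x + (\<Sum>z=1..x. (if z = x then 0 else 1) * chain_sum 0 p z)"
      using "3.prems"(2) by (simp add: sum.distrib)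
    finally have split: "(\<Sum>z=1..x. (if z = x then t else 1) * chain_sum 0 p z)
        = t * chain_sum 0 p x + (\<Sum>z=1..x. (if z = x then 0 else 1) * chain_sum 0 p z)" .
    show ?thesis
      using split that chain_sum_Cons[of p 0 k x] chain_sum_add_first[of 0 k "hd p" "tl p" x]
      by (simp add: algebra_simps)
  qed
  have "chain_sum t (k # k' # ks) x
      = 1 / real x ^ k * (\<Sum>z=1..x. (if z = x then t else 1) *
          sum_list (map (\<lambda>(p, s). t ^ s * chain_sum 0 p z) ?L))"
    using "3.IH" by (simp add: chain_sum_Cons)
  also have "\<dots> = sum_list (map (\<lambda>(p, s). t ^ s *
      (1 / real x ^ k * (\<Sum>z=1..x. (if z = x then t else 1) * chain_sum 0 p z))) ?L)"
    by (rule sum_list_map_scale)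
  also have "\<dots> = sum_list (map (\<lambda>(p, s). t ^ s * chain_sum 0 (k # p) x
      + t ^ Suc s * chain_sum 0 ((k + hd p) # tl p) x) ?L)"
  proof (intro arg_cong[where f=sum_list] map_cong refl)
    fix q assume q: "q \<in> set ?L"
    obtain p s where q_ps: "q = (p, s)" by force
    have ne: "p \<noteq> []" using combos_shape[of "k' # ks" q] q q_ps by simp
    show "(case q of (p, s) \<Rightarrow> t ^ s * (1 / real x ^ k *
          (\<Sum>z=1..x. (if z = x then t else 1) * chain_sum 0 p z))) =
        (case q of (p, s) \<Rightarrow> t ^ s * chain_sum 0 (k # p) x
          + t ^ Suc s * chain_sum 0 ((k + hd p) # tl p) x)"
      unfolding q_ps prod.case step[OF ne] by (simp add: algebra_simps)
  qed
  also have "\<dots> = sum_list (map (\<lambda>(p, s). t ^ s * chain_sum 0 p x) (combos (k # k' # ks)))"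
    by (simp add: sum_list_map_combos_step)
  finally show ?case .
qed simp
section \<open>Convergence\<close>

text \<open>Convergence rests on the crude bound \<open>chain_sum t c x <= H_x^(r-1) / x^(c_1)\<close>
  (\<open>chain_sum_le_harm\<close>) together with \<open>H_x <= 1 + ln x\<close>.\<close>

lemma harm_le_ln_plus_one: "1 \<le> n \<Longrightarrow> harm n \<le> ln (real n) + (1::real)"
  using euler_mascheroni_sequence_decreasing[of 1 n] by (simp add: harm_def)

lemma harm_ge1: "1 \<le> n \<Longrightarrow> (1::real) \<le> harm n"
  using harm_mono[of 1 n] by (simp add: harm_def)

lemma harm_power_le:
  assumes n: "1 \<le> n"
  shows "harm n ^ m \<le> (3 + 2 * real m) ^ m * real n powr (1/2)"
proof -
  define a :: real where "a = 1 / (2 * (real m + 1))"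
  have a: "0 < a" unfolding a_def by simp
  have npos: "0 < real n" using n by simp
  have pa1: "1 \<le> real n powr a" using n a by (intro ge_one_powr_ge_zero) auto
  have "a * ln (real n) = ln (real n powr a)" by (simp add: ln_powr)
  also have "\<dots> \<le> real n powr a - 1" using npos by (intro ln_le_minus_one) simp
  finally have "a * ln (real n) \<le> real n powr a - 1" .
  then have lnle: "ln (real n) \<le> (real n powr a) / a" using a by (simp add: field_simps)
  have "harm n \<le> 1 + real n powr a / a" using harm_le_ln_plus_one[OF n] lnle by simp
  also have "\<dots> \<le> (1 + 1 / a) * real n powr a" using pa1 a by (simp add: field_simps)
  also have "1 + 1 / a = 3 + 2 * real m" unfolding a_def by (simp add: field_simps)
  finally have h: "harm n \<le> (3 + 2 * real m) * real n powr a" .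
  have "harm n ^ m \<le> ((3 + 2 * real m) * real n powr a) ^ m"
    using h harm_nonneg by (intro power_mono) auto
  also have "\<dots> = (3 + 2 * real m) ^ m * real n powr (real m * a)"
    using npos by (simp add: power_mult_distrib powr_power)
  also have "real n powr (real m * a) \<le> real n powr (1/2)"
    using n unfolding a_def by (intro powr_mono) (auto simp: field_simps)
  then have "(3 + 2 * real m) ^ m * real n powr (real m * a) \<le> (3 + 2 * real m) ^ m * real n powr (1/2)"
    by (intro mult_left_mono) auto
  finally show ?thesis .
qed

text \<open>Hence \<open>\<Sum>\<^sub>x H_x^m / x^2\<close> converges (comparison with \<open>x^(-3/2)\<close>).\<close>
lemma summable_harm_power:
  "summable (\<lambda>i. harm (Suc i) ^ m / real (Suc i) ^ 2 :: real)"
proof (rule summable_comparison_test')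
  have "summable (\<lambda>n. real n powr (-3/2))" by (simp add: summable_real_powr_iff)
  then have "summable (\<lambda>i. real (Suc i) powr (-3/2))"
    using summable_Suc_iff[of "\<lambda>n. real n powr (-3/2)"] by simp
  then show "summable (\<lambda>i. (3 + 2 * real m) ^ m * real (Suc i) powr (-3/2))"
    by (rule summable_mult)
next
  fix i :: nat
  have "real (Suc i) powr (1/2) / real (Suc i) ^ 2 = real (Suc i) powr (-3/2)"
    using powr_add[of "real (Suc i)" "-3/2" 2] by (simp add: powr_numeral)
  moreover have "harm (Suc i) ^ m / real (Suc i) ^ 2
      \<le> (3 + 2 * real m) ^ m * (real (Suc i) powr (1/2) / real (Suc i) ^ 2)"
    unfolding times_divide_eq_right by (intro divide_right_mono harm_power_le) auto
  ultimately show "norm (harm (Suc i) ^ m / real (Suc i) ^ 2)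
      \<le> (3 + 2 * real m) ^ m * real (Suc i) powr (-3/2)"
    by (simp add: harm_nonneg)
qed

text \<open>Each of the r - 1 later points of a chain contributes at most a factor H_x.\<close>
lemma chain_sum_le_harm:
  assumes "c \<noteq> []" "0 \<le> t" "t \<le> 1" "\<forall>y\<in>set (tl c). 1 \<le> y" "1 \<le> x"
  shows "chain_sum t c x \<le> harm x ^ (length c - 1) / real x ^ hd c"
  using assms(1,4,5)
proof (induction c arbitrary: x)
  case Nil
  then show ?case by simp
next
  case (Cons a cs)
  show ?case
  proof (cases "cs = []")
    case True
    then show ?thesis using Cons.prems chain_sum_single[of x t a] by simp
  next
    case False
    have ind: "\<forall>y\<in>set (tl cs). 1 \<le> y" using Cons.prems False by (cases cs) auto
    have hd1: "1 \<le> hd cs" using Cons.prems False by (cases cs) auto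
    have rec: "chain_sum t (a # cs) x
        = 1 / real x ^ a * (\<Sum>z=1..x. (if z = x then t else 1) * chain_sum t cs z)"
      using False by (simp add: chain_sum_Cons)
    have "(\<Sum>z=1..x. (if z = x then t else 1) * chain_sum t cs z)
        \<le> (\<Sum>z=1..x. harm x ^ (length cs - 1) * (1 / real z))"
    proof (intro sum_mono)
      fix z assume z: "z \<in> {1..x}"
      have "(if z = x then t else 1) * chain_sum t cs z \<le> 1 * chain_sum t cs z"
        using assms(2,3) chain_sum_nonneg[OF assms(2)] by (intro mult_right_mono) auto
      also have "\<dots> \<le> harm z ^ (length cs - 1) / real z ^ hd cs"
        using Cons.IH[OF False ind] z by simp
      also have "\<dots> \<le> harm x ^ (length cs - 1) / real z ^ hd cs"
        using z by (intro divide_right_mono power_mono harm_mono harm_nonneg) auto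
      also have "\<dots> \<le> harm x ^ (length cs - 1) / real z"
      proof (intro divide_left_mono)
        have "real z ^ 1 \<le> real z ^ hd cs" using z hd1 by (intro power_increasing) auto
        then show "real z \<le> real z ^ hd cs" by simp
      qed (use z in \<open>auto intro!: zero_le_power harm_nonneg\<close>)
      finally show "(if z = x then t else 1) * chain_sum t cs z
          \<le> harm x ^ (length cs - 1) * (1 / real z)"
        by simp
    qed
    also have "(\<Sum>z=1..x. harm x ^ (length cs - 1) * (1 / real z)) = harm x ^ (length cs - 1) * harm x"
      by (simp add: harm_def sum_distrib_left divide_inverse)
    finally have "(\<Sum>z=1..x. (if z = x then t else 1) * chain_sum t cs z)
        \<le> harm x ^ (length cs - 1) * harm x" .
    then have "chain_sum t (a # cs) x \<le> 1 / real x ^ a * (harm x ^ (length cs - 1) * harm x)"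
      unfolding rec by (intro mult_left_mono) auto
    also have "\<dots> = harm x ^ (length (a # cs) - 1) / real x ^ hd (a # cs)"
      using False by (cases cs) auto
    finally show ?thesis .
  qed
qed

section \<open>Sums over the positive integers in ennreal\<close>

text \<open>\<open>pos_sum f = \<Sum>\<^sub>x\<^sub>\<ge>\<^sub>1 f x\<close>, taken in \<open>ennreal\<close>: for nonnegative terms it is always
  defined and obeys the usual linearity laws without any convergence hypothesis.\<close>
definition pos_sum :: "(nat \<Rightarrow> real) \<Rightarrow> ennreal" where
  "pos_sum f = (\<Sum>i. ennreal (f (Suc i)))"

lemma pos_sum_cong: "(\<And>x. 1 \<le> x \<Longrightarrow> f x = g x) \<Longrightarrow> pos_sum f = pos_sum g"
  unfolding pos_sum_def by simp

lemma pos_sum_add: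
  assumes "\<And>x. 1 \<le> x \<Longrightarrow> 0 \<le> f x" "\<And>x. 1 \<le> x \<Longrightarrow> 0 \<le> g x"
  shows "pos_sum (\<lambda>x. f x + g x) = pos_sum f + pos_sum g"
  unfolding pos_sum_def using assms
  by (subst suminf_add[OF summableI summableI]) (simp add: ennreal_plus)

lemma pos_sum_cmult:
  assumes "0 \<le> c" "\<And>x. 1 \<le> x \<Longrightarrow> 0 \<le> f x"
  shows "pos_sum (\<lambda>x. c * f x) = ennreal c * pos_sum f"
  unfolding pos_sum_def using assms
  by (simp add: ennreal_mult)

lemma pos_sum_mono:
  assumes "\<And>x. 1 \<le> x \<Longrightarrow> f x \<le> g x"
  shows "pos_sum f \<le> pos_sum g"
  unfolding pos_sum_def using assms
  by (intro suminf_le summableI ennreal_leI) auto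

lemma pos_sum_summable:
  assumes "\<And>x. 1 \<le> x \<Longrightarrow> 0 \<le> f x" "summable (\<lambda>i. f (Suc i))"
  shows "pos_sum f = ennreal (\<Sum>i. f (Suc i))"
  unfolding pos_sum_def using assms by (intro suminf_ennreal2) auto

lemma pos_sum_finite:
  assumes "\<And>x. 1 \<le> x \<Longrightarrow> 0 \<le> g x" "\<And>x. 1 \<le> x \<Longrightarrow> f x \<le> g x" "summable (\<lambda>i. g (Suc i))"
  shows "pos_sum f < top"
proof -
  have "pos_sum f \<le> pos_sum g" by (rule pos_sum_mono) (use assms in auto)
  also have "\<dots> = ennreal (\<Sum>i. g (Suc i))" using assms by (intro pos_sum_summable)
  finally show ?thesis using order.strict_trans1 by fastforce
qed

lemma pos_sum_sum:
  assumes "finite A" "\<And>j x. j \<in> A \<Longrightarrow> 1 \<le> x \<Longrightarrow> 0 \<le> f j x"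
  shows "pos_sum (\<lambda>x. \<Sum>j\<in>A. f j x) = (\<Sum>j\<in>A. pos_sum (f j))"
  using assms
proof (induction A rule: finite_induct)
  case empty
  then show ?case by (simp add: pos_sum_def)
next
  case (insert a A)
  have "pos_sum (\<lambda>x. \<Sum>j\<in>insert a A. f j x) = pos_sum (\<lambda>x. f a x + (\<Sum>j\<in>A. f j x))"
    using insert by simp
  also have "\<dots> = pos_sum (f a) + pos_sum (\<lambda>x. \<Sum>j\<in>A. f j x)"
    using insert.prems by (intro pos_sum_add) (auto intro!: sum_nonneg)
  finally show ?case using insert by simp
qed

lemma chain_sum_pos_sum_finite:
  assumes "p \<noteq> []" "2 \<le> hd p" "\<forall>y\<in>set p. 1 \<le> y" "0 \<le> t" "t \<le> 1"
  shows "pos_sum (chain_sum t p) < top"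
proof (rule pos_sum_finite)
  show "summable (\<lambda>i. harm (Suc i) ^ (length p - 1) / real (Suc i) ^ 2)"
    by (rule summable_harm_power)
next
  fix x :: nat assume x: "1 \<le> x"
  show "0 \<le> harm x ^ (length p - 1) / real x ^ 2"
    by (intro divide_nonneg_nonneg zero_le_power harm_nonneg) auto
  have tl: "\<forall>y\<in>set (tl p). 1 \<le> y" using assms(1,3) by (cases p) auto
  have "chain_sum t p x \<le> harm x ^ (length p - 1) / real x ^ hd p"
    using chain_sum_le_harm[OF assms(1,4,5) tl x] .
  also have "\<dots> \<le> harm x ^ (length p - 1) / real x ^ 2"
    using x assms(2) by (intro divide_left_mono power_increasing)
      (auto intro!: zero_le_power harm_nonneg)
  finally show "chain_sum t p x \<le> harm x ^ (length p - 1) / real x ^ 2" .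
qed

lemma suminf_swap_ennreal: "(\<Sum>i. \<Sum>j. f i j :: ennreal) = (\<Sum>j. \<Sum>i. f i j)"
proof -
  have "(\<Sum>i. \<Sum>j. f i j) = (\<integral>\<^sup>+i. (\<integral>\<^sup>+j. f i j \<partial>count_space UNIV) \<partial>count_space UNIV)"
    by (simp add: nn_integral_count_space_nat)
  also have "\<dots> = (\<integral>\<^sup>+j. (\<integral>\<^sup>+i. f i j \<partial>count_space UNIV) \<partial>count_space UNIV)"
    by (rule nn_integral_count_space_nn_integral) auto
  also have "\<dots> = (\<Sum>j. \<Sum>i. f i j)"
    by (simp add: nn_integral_count_space_nat)
  finally show ?thesis .
qed

lemma suminf_shift_ennreal: "(\<Sum>i. g (i + j) :: ennreal) = (\<Sum>i. if j \<le> i then g i else 0)"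
proof -
  have bij: "bij_betw (\<lambda>i. i + j) UNIV {j..}"
    by (rule bij_betw_byWitness[where f'="\<lambda>i. i - j"]) auto
  have "(\<Sum>i. g (i + j)) = (\<integral>\<^sup>+i. g (i + j) \<partial>count_space UNIV)"
    by (simp add: nn_integral_count_space_nat)
  also have "\<dots> = (\<integral>\<^sup>+i. g i \<partial>count_space {j..})"
    by (rule nn_integral_bij_count_space[OF bij])
  also have "\<dots> = (\<integral>\<^sup>+i. g i * indicator {j..} i \<partial>count_space UNIV)"
    by (rule nn_integral_count_space_indicator) auto
  also have "\<dots> = (\<Sum>i. if j \<le> i then g i else 0)"
    by (simp add: nn_integral_count_space_nat indicator_def) (rule arg_cong[where f=suminf], auto)
  finally show ?thesis .
qed

lemma suminf_triangle_swap: "(\<Sum>i. \<Sum>j\<le>i. (f i j :: ennreal)) = (\<Sum>j. \<Sum>i. f (i + j) j)"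
proof -
  have e: "(\<Sum>j. if j \<le> i then f i j else 0) = (\<Sum>j\<le>i. f i j)" for i
  proof -
    have "(\<Sum>j. if j \<le> i then f i j else 0) = (\<Sum>j\<in>{..i}. if j \<le> i then f i j else 0)"
      by (rule suminf_finite) auto
    then show ?thesis by simp
  qed
  have "(\<Sum>i. \<Sum>j\<le>i. f i j) = (\<Sum>i. \<Sum>j. if j \<le> i then f i j else 0)"
    by (simp add: e)
  also have "\<dots> = (\<Sum>j. \<Sum>i. if j \<le> i then f i j else 0)"
    by (rule suminf_swap_ennreal)
  also have "\<dots> = (\<Sum>j. \<Sum>i. f (i + j) j)"
    by (rule arg_cong[where f=suminf], rule ext, rule suminf_shift_ennreal[symmetric])
  finally show ?thesis .
qed

section \<open>Multiple zeta values as sums of chain sums\<close>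

definition mzv_term :: "nat list \<Rightarrow> nat list \<Rightarrow> real" where
  "mzv_term p ms = (\<Prod>i<length p. 1 / real (ms ! i) ^ (p ! i))"

definition mzv_chains :: "nat list \<Rightarrow> nat list set" where
  "mzv_chains p = {ms. length ms = length p \<and> sorted_wrt (>) ms \<and> (\<forall>m\<in>set ms. 0 < m)}"

definition mzv_chains_from :: "nat list \<Rightarrow> nat \<Rightarrow> nat list set" where
  "mzv_chains_from p x = {ms \<in> mzv_chains p. hd ms = x}"

lemma mzv_as_infsum: "mzv p = infsum (mzv_term p) (mzv_chains p)"
  unfolding mzv_def mzv_term_def mzv_chains_def by simp

lemma mzv_term_nonneg: "0 \<le> mzv_term p ms"
  unfolding mzv_term_def by (auto intro!: prod_nonneg)

lemma mzv_nonneg: "0 \<le> mzv p"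
  unfolding mzv_as_infsum by (intro infsum_nonneg mzv_term_nonneg)

lemma sorted_hd_ge: "sorted_wrt (>) ms \<Longrightarrow> y \<in> set ms \<Longrightarrow> y \<le> (hd ms :: nat)"
  by (induction ms) auto

lemma mzv_chains_from_single: "1 \<le> x \<Longrightarrow> mzv_chains_from [a] x = {[x]}"
proof (intro set_eqI iffI)
  fix ms assume "ms \<in> mzv_chains_from [a] x"
  then have "length ms = 1" "hd ms = x" unfolding mzv_chains_from_def mzv_chains_def by auto
  then show "ms \<in> {[x]}" by (cases ms) auto
qed (auto simp: mzv_chains_from_def mzv_chains_def)

lemma mzv_chains_from_Cons:
  assumes "q \<noteq> []"
  shows "mzv_chains_from (a # q) x = (\<lambda>ms. x # ms) ` (\<Union>z\<in>{1..<x}. mzv_chains_from q z)"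
proof (intro set_eqI iffI)
  fix ms assume "ms \<in> mzv_chains_from (a # q) x"
  then have l: "length ms
      = Suc (length q)" and s: "sorted_wrt (>) ms" and p: "\<forall>m\<in>set ms. 0 < m" and h: "hd ms = x"
    unfolding mzv_chains_from_def mzv_chains_def by auto
  obtain ms' where ms: "ms = x # ms'" using l h by (cases ms) auto
  have ne: "ms' \<noteq> []" using l ms assms by auto
  have "hd ms' \<in> set ms'" using ne by simp
  then have z: "hd ms' < x" "0 < hd ms'" using s p ms by auto
  have "ms' \<in> mzv_chains_from q (hd ms')"
    using l s p ms unfolding mzv_chains_from_def mzv_chains_def by auto
  then show "ms \<in> (\<lambda>ms. x # ms) ` (\<Union>z\<in>{1..<x}. mzv_chains_from q z)" using z ms by force
next
  fix ms assume "ms \<in> (\<lambda>ms. x # ms) ` (\<Union>z\<in>{1..<x}. mzv_chains_from q z)"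
  then obtain ms' z where ms: "ms = x # ms'" and z: "1 \<le> z" "z < x" and m: "ms' \<in> mzv_chains_from q z"
    by auto
  have "\<forall>y\<in>set ms'. y < x"
    using m z sorted_hd_ge[of ms'] unfolding mzv_chains_from_def mzv_chains_def by fastforce
  then show "ms \<in> mzv_chains_from (a # q) x"
    using m z ms unfolding mzv_chains_from_def mzv_chains_def by auto
qed

lemma mzv_term_Cons: "mzv_term (a # q) (x # ms) = 1 / real x ^ a * mzv_term q ms"
  unfolding mzv_term_def length_Cons prod.lessThan_Suc_shift by simp

lemma mzv_chains_from_sum:
  assumes "p \<noteq> []" "1 \<le> x"
  shows "finite (mzv_chains_from p x) \<and> (\<Sum>ms\<in>mzv_chains_from p x. mzv_term p ms) = chain_sum 0 p x"
  using assms
proof (induction p arbitrary: x)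
  case Nil
  then show ?case by simp
next
  case (Cons a q)
  show ?case
  proof (cases "q = []")
    case True
    then show ?thesis using Cons.prems by (simp add: mzv_chains_from_single chain_sum_single mzv_term_def)
  next
    case False
    let ?U = "\<Union>z\<in>{1..<x}. mzv_chains_from q z"
    have fin: "\<And>z. z \<in> {1..<x} \<Longrightarrow> finite (mzv_chains_from q z)" using Cons.IH False by auto
    have sums: "\<And>z. z \<in> {1..<x} \<Longrightarrow> (\<Sum>ms\<in>mzv_chains_from q z. mzv_term q ms) = chain_sum 0 q z"
      using Cons.IH False by auto
    have finU: "finite ?U" using fin by auto
    have inj: "inj_on (\<lambda>ms. x # ms) ?U" by (auto simp: inj_on_def)
    have disj: "pairwise (\<lambda>z z'. mzv_chains_from q z \<inter> mzv_chains_from q z' = {}) {1..<x}"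
      by (auto simp: pairwise_def mzv_chains_from_def)
    have "(\<Sum>ms\<in>mzv_chains_from (a # q) x. mzv_term (a # q) ms) = (\<Sum>ms\<in>?U. mzv_term (a # q) (x # ms))"
      unfolding mzv_chains_from_Cons[OF False] by (subst sum.reindex[OF inj]) (simp add: o_def)
    also have "\<dots> = 1 / real x ^ a * (\<Sum>ms\<in>?U. mzv_term q ms)"
      by (simp add: mzv_term_Cons sum_distrib_left)
    also have "(\<Sum>ms\<in>?U. mzv_term q ms) = (\<Sum>z\<in>{1..<x}. \<Sum>ms\<in>mzv_chains_from q z. mzv_term q ms)"
      using fin by (intro sum.UNION_disjoint) (auto simp: mzv_chains_from_def)
    also have "\<dots> = (\<Sum>z\<in>{1..<x}. chain_sum 0 q z)"
      using sums by simp
    also have "\<dots> = (\<Sum>z=1..x. (if z = x then 0 else 1) * chain_sum 0 q z)"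
      by (rule sum.mono_neutral_cong_left) auto
    finally have "(\<Sum>ms\<in>mzv_chains_from (a # q) x. mzv_term (a # q) ms) = chain_sum 0 (a # q) x"
      using False by (simp add: chain_sum_Cons)
    moreover have "finite (mzv_chains_from (a # q) x)"
      unfolding mzv_chains_from_Cons[OF False] using finU by simp
    ultimately show ?thesis by simp
  qed
qed

lemma mzv_chains_hd:
  assumes "p \<noteq> []" "ms \<in> mzv_chains p"
  shows "ms \<in> mzv_chains_from p (hd ms) \<and> 1 \<le> hd ms"
proof -
  have "ms \<noteq> []" using assms unfolding mzv_chains_def by auto
  then have "hd ms \<in> set ms" by simp
  then show ?thesis using assms unfolding mzv_chains_from_def mzv_chains_def by auto
qed

text \<open>If the chain sums are summable, so is the defining family of the MZV: every finite
  set of chains lies in the chains starting below some bound N.\<close>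
lemma mzv_term_summable_on:
  assumes p: "p \<noteq> []" and summ: "summable (\<lambda>i. chain_sum 0 p (Suc i))"
  shows "mzv_term p summable_on mzv_chains p"
proof (rule nonneg_bdd_above_summable_on)
  show "\<And>x. x \<in> mzv_chains p \<Longrightarrow> 0 \<le> mzv_term p x" by (rule mzv_term_nonneg)
  show "bdd_above (sum (mzv_term p) ` {F. F \<subseteq> mzv_chains p \<and> finite F})"
  proof (rule bdd_aboveI2)
    fix F assume F: "F \<in> {F. F \<subseteq> mzv_chains p \<and> finite F}"
    define N where "N = Max (insert 0 (hd ` F))"
    have sub: "F \<subseteq> (\<Union>x\<in>{1..N}. mzv_chains_from p x)"
    proof
      fix ms assume ms: "ms \<in> F"
      then have "ms \<in> mzv_chains_from p (hd ms) \<and> 1 \<le> hd ms" using F mzv_chains_hd[OF p] by auto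
      moreover have "hd ms \<le> N" unfolding N_def using F ms by (intro Max_ge) auto
      ultimately show "ms \<in> (\<Union>x\<in>{1..N}. mzv_chains_from p x)" by auto
    qed
    have fin: "\<And>x. x \<in> {1..N} \<Longrightarrow> finite (mzv_chains_from p x)"
      using mzv_chains_from_sum[OF p] by auto
    have "sum (mzv_term p) F \<le> sum (mzv_term p) (\<Union>x\<in>{1..N}. mzv_chains_from p x)"
      using sub fin by (intro sum_mono2 mzv_term_nonneg) auto
    also have "\<dots> = (\<Sum>x\<in>{1..N}. \<Sum>ms\<in>mzv_chains_from p x. mzv_term p ms)"
      using fin by (intro sum.UNION_disjoint) (auto simp: mzv_chains_from_def)
    also have "\<dots> = (\<Sum>i<N. chain_sum 0 p (Suc i))"
      using mzv_chains_from_sum[OF p] by (simp add: sum.atLeast1_atMost_eq)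
    also have "\<dots> \<le> (\<Sum>i. chain_sum 0 p (Suc i))"
      using summ by (intro sum_le_suminf) (auto intro: chain_sum_nonneg)
    finally show "sum (mzv_term p) F \<le> (\<Sum>i. chain_sum 0 p (Suc i))" .
  qed
qed

text \<open>Grouping the chains by their first (largest) element.\<close>
lemma mzv_eq_suminf_chain_sum:
  assumes p: "p \<noteq> []" and summ: "summable (\<lambda>i. chain_sum 0 p (Suc i))"
  shows "mzv p = (\<Sum>i. chain_sum 0 p (Suc i))"
proof -
  have bij: "bij_betw snd (Sigma {1..} (mzv_chains_from p)) (mzv_chains p)"
    by (rule bij_betw_byWitness[where f'="\<lambda>ms. (hd ms, ms)"])
       (use mzv_chains_hd[OF p] in \<open>auto simp: mzv_chains_from_def\<close>)
  have summ_Sigma: "(\<lambda>xy. mzv_term p (snd xy)) summable_on (Sigma {1..} (mzv_chains_from p))"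
    using summable_on_reindex_bij_betw[OF bij, of "mzv_term p"] mzv_term_summable_on[OF p summ]
    by simp
  have Suc_bij: "bij_betw Suc UNIV {1..}"
    by (rule bij_betw_byWitness[where f'="\<lambda>i. i - 1"]) auto
  have "mzv p = infsum (\<lambda>xy. mzv_term p (snd xy)) (Sigma {1..} (mzv_chains_from p))"
    unfolding mzv_as_infsum by (rule infsum_reindex_bij_betw[OF bij, symmetric])
  also have "\<dots> = infsum (\<lambda>x. infsum (\<lambda>ms. mzv_term p (snd (x, ms))) (mzv_chains_from p x)) {1..}"
    by (rule infsum_Sigma_banach[OF summ_Sigma, symmetric])
  also have "\<dots> = infsum (chain_sum 0 p) {1..}"
    using mzv_chains_from_sum[OF p] by (intro infsum_cong) auto
  also have "\<dots> = infsum (\<lambda>i. chain_sum 0 p (Suc i)) UNIV"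
    by (rule infsum_reindex_bij_betw[OF Suc_bij, symmetric])
  also have "\<dots> = (\<Sum>i. chain_sum 0 p (Suc i))"
    using summ by (intro infsumI sums_nonneg_imp_has_sum summable_sums) (auto intro: chain_sum_nonneg)
  finally show ?thesis .
qed

lemma mzv_as_pos_sum:
  assumes "p \<noteq> []" "2 \<le> hd p" "\<forall>y\<in>set p. 1 \<le> y"
  shows "ennreal (mzv p) = pos_sum (chain_sum 0 p)"
proof -
  have fin: "pos_sum (chain_sum 0 p) < top" using chain_sum_pos_sum_finite[OF assms] by simp
  have nn: "\<And>x. 0 \<le> chain_sum 0 p x" by (rule chain_sum_nonneg) simp
  have summ: "summable (\<lambda>i. chain_sum 0 p (Suc i))"
    using fin nn unfolding pos_sum_def by (intro summable_suminf_not_top) auto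
  show ?thesis
    using mzv_eq_suminf_chain_sum[OF assms(1) summ] pos_sum_summable[OF _ summ] nn by simp
qed

lemma poly_zeta_t: "poly (zeta_t c) t = sum_list (map (\<lambda>(p, s). t ^ s * mzv p) (combos c))"
proof -
  have "poly (sum_list (map (\<lambda>(p, s). monom (mzv p) s) L)) t
          = sum_list (map (\<lambda>(p, s). t ^ s * mzv p) L)" for L
    by (induction L) (auto simp: poly_monom)
  then show ?thesis unfolding zeta_t_def by simp
qed

lemma poly_zeta_t_nonneg: "0 \<le> t \<Longrightarrow> 0 \<le> poly (zeta_t c) t"
  unfolding poly_zeta_t
  by (intro sum_list_nonneg) (auto intro!: mult_nonneg_nonneg zero_le_power mzv_nonneg)

lemma pos_sum_sum_list:
  assumes "\<forall>q\<in>set L. ennreal (mzv (fst q)) = pos_sum (chain_sum 0 (fst q))" "0 \<le> t"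
  shows "pos_sum (\<lambda>x. sum_list (map (\<lambda>(p, s). t ^ s * chain_sum 0 p x) L))
      = ennreal (sum_list (map (\<lambda>(p, s). t ^ s * mzv p) L))"
  using assms(1)
proof (induction L)
  case Nil
  then show ?case by (simp add: pos_sum_def)
next
  case (Cons q L)
  obtain p s where q: "q = (p, s)" by force
  have nn1: "\<And>x. 0 \<le> t ^ s * chain_sum 0 p x"
    using assms(2) by (intro mult_nonneg_nonneg zero_le_power chain_sum_nonneg) auto
  have nn2: "\<And>x. 0 \<le> sum_list (map (\<lambda>(p, s). t ^ s * chain_sum 0 p x) L)"
    using assms(2) by (intro sum_list_nonneg)
      (auto intro!: mult_nonneg_nonneg zero_le_power chain_sum_nonneg)
  have nn3: "0 \<le> sum_list (map (\<lambda>(p, s). t ^ s * mzv p) L)"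
    using assms(2) by (intro sum_list_nonneg) (auto intro!: mult_nonneg_nonneg zero_le_power mzv_nonneg)
  have "pos_sum (\<lambda>x. sum_list (map (\<lambda>(p, s). t ^ s * chain_sum 0 p x) (q # L))) =
        pos_sum (\<lambda>x. t ^ s * chain_sum 0 p x + sum_list (map (\<lambda>(p, s). t ^ s * chain_sum 0 p x) L))"
    unfolding q by simp
  also have "\<dots>
      = pos_sum (\<lambda>x. t ^ s * chain_sum 0 p x) + pos_sum (\<lambda>x. sum_list (map (\<lambda>(p, s). t ^ s * chain_sum 0 p x) L))"
    using nn1 nn2 by (intro pos_sum_add) auto
  also have "pos_sum (\<lambda>x. t ^ s * chain_sum 0 p x) = ennreal (t ^ s) * pos_sum (chain_sum 0 p)"
    using assms(2) by (intro pos_sum_cmult) (auto intro: chain_sum_nonneg)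
  also have "pos_sum (chain_sum 0 p) = ennreal (mzv p)" using Cons.prems q by simp
  also have "pos_sum (\<lambda>x. sum_list (map (\<lambda>(p, s). t ^ s * chain_sum 0 p x) L))
      = ennreal (sum_list (map (\<lambda>(p, s). t ^ s * mzv p) L))"
    using Cons by simp
  also have "ennreal (t ^ s) * ennreal (mzv p) + ennreal (sum_list (map (\<lambda>(p, s). t ^ s * mzv p) L)) =
             ennreal (sum_list (map (\<lambda>(p, s). t ^ s * mzv p) (q # L)))"
    using assms(2) nn3 mzv_nonneg[of p] unfolding q by (simp add: ennreal_mult ennreal_plus)
  finally show ?case .
qed

lemma zeta_t_as_pos_sum:
  assumes "c \<noteq> []" "2 \<le> hd c" "\<forall>y\<in>set c. 1 \<le> y" "0 \<le> t" "t \<le> 1"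
  shows "ennreal (poly (zeta_t c) t) = pos_sum (chain_sum t c)"
proof -
  have adm: "\<forall>q\<in>set (combos c). ennreal (mzv (fst q)) = pos_sum (chain_sum 0 (fst q))"
  proof
    fix q assume q: "q \<in> set (combos c)"
    have pr: "fst q \<noteq> [] \<and> hd c \<le> hd (fst q) \<and> ((\<forall>x\<in>set c. 1 \<le> x) \<longrightarrow> (\<forall>x\<in>set (fst q). 1 \<le> x))"
      by (rule combos_shape[OF assms(1) q])
    then have "\<forall>x\<in>set (fst q). 1 \<le> x" using assms(3) by blast
    moreover have "fst q \<noteq> []" "2 \<le> hd (fst q)" using pr assms(2) by auto
    ultimately show "ennreal (mzv (fst q)) = pos_sum (chain_sum 0 (fst q))"
      by (intro mzv_as_pos_sum) auto
  qed
  have "pos_sum (chain_sum t c)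
      = pos_sum (\<lambda>x. sum_list (map (\<lambda>(p, s). t ^ s * chain_sum 0 p x) (combos c)))"
    by (intro pos_sum_cong chain_sum_combos[OF assms(1)])
  also have "\<dots> = ennreal (poly (zeta_t c) t)"
    unfolding poly_zeta_t by (rule pos_sum_sum_list[OF adm assms(4)])
  finally show ?thesis by simp
qed



section \<open>Elementary identities\<close>

text \<open>The partial-fraction identity behind the connector relation \<open>connector_A_P\<close>:
  for u = 1/x, v = 1/y, w = 1/(x - y) one has w (v - u) = u v.\<close>
lemma key_poly:
  fixes u v w :: real
  assumes h: "w * (v - u) = u * v"
  shows "(\<Sum>j=1..b. u ^ (Suc b + 1 - j) * v ^ j) + u ^ Suc b * w = u * v ^ b * w"
proof (induction b)
  case 0
  then show ?case by simp
next
  case (Suc b)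
  have h': "u * w + u * v = v * w" using h by (simp add: algebra_simps)
  have e: "(\<Sum>j=1..Suc b. u ^ (Suc (Suc b) + 1 - j) * v ^ j)
      = u * ((\<Sum>j=1..b. u ^ (Suc b + 1 - j) * v ^ j) + u * v ^ Suc b)"
  proof -
    have "(\<Sum>j=1..Suc b. u ^ (Suc (Suc b) + 1 - j) * v ^ j)
        = (\<Sum>j=1..Suc b. u * (u ^ (Suc b + 1 - j) * v ^ j))"
    proof (rule sum.cong[OF refl])
      fix j assume "j \<in> {1..Suc b}"
      then have "Suc (Suc b) + 1 - j = Suc (Suc b + 1 - j)" by auto
      then show "u ^ (Suc (Suc b) + 1 - j) * v ^ j = u * (u ^ (Suc b + 1 - j) * v ^ j)" by simp
    qed
    also have "\<dots> = u * (\<Sum>j=1..Suc b. u ^ (Suc b + 1 - j) * v ^ j)" by (rule sum_distrib_left[symmetric])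
    also have "(\<Sum>j=1..Suc b. u ^ (Suc b + 1 - j) * v ^ j)
        = (\<Sum>j=1..b. u ^ (Suc b + 1 - j) * v ^ j) + u * v ^ Suc b"
      by simp
    finally show ?thesis .
  qed
  have "(\<Sum>j=1..Suc b. u ^ (Suc (Suc b) + 1 - j) * v ^ j) + u ^ Suc (Suc b) * w
      = u * ((u * v ^ b * w - u ^ Suc b * w) + u * v ^ Suc b) + u ^ Suc (Suc b) * w"
  proof -
    have S: "(\<Sum>j=1..b. u ^ (Suc b + 1 - j) * v ^ j) = u * v ^ b * w - u ^ Suc b * w"
      using Suc by linarith
    show ?thesis unfolding e S by (simp add: algebra_simps)
  qed
  also have "\<dots> = u * v ^ b * (u * w + u * v)" by (simp add: algebra_simps)
  also have "\<dots> = u * v ^ Suc b * w" unfolding h' by (simp add: algebra_simps)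
  finally show ?case .
qed

lemma key_identity:
  assumes "y < x" "1 \<le> y"
  shows "(\<Sum>j=1..b. 1 / real x ^ (Suc b + 1 - j) * (1 / real y ^ j)) + 1 / real x ^ Suc b / (real x - real y)
       = 1 / real x * (1 / real y ^ b) / (real x - real y)"
proof -
  have h: "(1 / (real x - real y)) * (1 / real y - 1 / real x) = (1 / real x) * (1 / real y)"
    using assms by (simp add: field_simps)
  from key_poly[OF h, of b] show ?thesis
    by (simp add: power_one_over divide_inverse mult.assoc power_inverse)
qed

lemma harm_shift_sum: "(\<Sum>i<N. 1 / real (m + Suc i)) = harm (m + N) - harm m"
  by (induction N) (auto simp: harm_Suc divide_inverse)

text \<open>\<open>\<Sum>\<^sub>i\<^sub>\<ge>\<^sub>0 1/((z+1+i)(z+1+i-y)) = (H_z - H_(z-y))/y\<close>, by telescoping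
  \<open>1/(d+1+i) - 1/(z+1+i)\<close> with d = z - y.\<close>
lemma telescope_harm:
  assumes "1 \<le> y" "y \<le> z"
  shows "(\<lambda>i. 1 / (real (z + Suc i) * (real (z + Suc i) - real y)))
           sums ((harm z - harm (z - y)) / real y)"
proof -
  define d where "d = z - y"
  have zd: "z = d + y" using assms unfolding d_def by auto
  define f where "f N = (\<Sum>j<y. 1 / real (N + d + Suc j))" for N
  have f_step: "f N - f (Suc N) = 1 / real (d + Suc N) - 1 / real (z + Suc N)" for N
  proof -
    have "f N - f (Suc N) = (\<Sum>j<y. 1 / real (N + d + Suc j) - 1 / real (N + d + Suc (Suc j)))"
      unfolding f_def sum_subtractf by simp
    also have "\<dots> = 1 / real (N + d + Suc 0) - 1 / real (N + d + Suc y)"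
      by (rule sum_lessThan_telescope')
    finally show ?thesis unfolding zd by (simp add: algebra_simps)
  qed
  have "f \<longlonglongrightarrow> 0"
    unfolding f_def
  proof (intro tendsto_null_sum)
    fix j
    show "(\<lambda>N. 1 / real (N + d + Suc j)) \<longlonglongrightarrow> 0"
      using LIMSEQ_ignore_initial_segment[OF LIMSEQ_inverse_real_of_nat, of "d + j"]
      by (simp add: divide_inverse algebra_simps)
  qed
  from telescope_sums'[OF this]
  have "(\<lambda>N. 1 / real (d + Suc N) - 1 / real (z + Suc N)) sums (f 0 - 0)"
    by (simp only: f_step)
  then have "(\<lambda>i. (1 / real y) * (1 / real (d + Suc i) - 1 / real (z + Suc i)))
               sums ((1 / real y) * (harm z - harm d))"
    using harm_shift_sum[of d y] by (intro sums_mult) (simp add: f_def zd add.commute)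
  moreover have "(1 / real y) * (1 / real (d + Suc i) - 1 / real (z + Suc i))
                 = 1 / (real (z + Suc i) * (real (z + Suc i) - real y))" for i
    using assms unfolding zd by (simp add: field_simps)
  ultimately show ?thesis unfolding d_def by simp
qed

lemma sum_inverse_gaps:
  assumes "1 \<le> z" "z \<le> x"
  shows "(\<Sum>y=1..z-1. 1 / (real x - real y)) = harm (x - 1) - harm (x - z)"
  using assms
proof (induction z rule: dec_induct)
  case base
  then show ?case by simp
next
  case (step z)
  have "(\<Sum>y=1..Suc z - 1. 1 / (real x - real y))
      = (\<Sum>y=1..z-1. 1 / (real x - real y)) + 1 / (real x - real z)"
    using step by (cases z) auto
  also have "x - z = Suc (x - Suc z)" using step by auto
  then have "harm (x - z) = harm (x - Suc z) + 1 / (real x - real z)"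
    using step by (simp add: harm_Suc divide_inverse of_nat_diff)
  ultimately show ?case using step by simp
qed

text \<open>The weight created by summing out the extra point y of \<open>conn_P\<close>, given the
  neighbouring point z of the chain: \<open>\<Sum>\<^sub>y 1/(x - y)\<close> over 1 <= y <= z, y < x, with
  weight t on y = z (lemma \<open>weight_P_sum\<close>).\<close>
definition weight_P :: "real \<Rightarrow> nat \<Rightarrow> nat \<Rightarrow> real" where
  "weight_P t x z = harm (x - 1) - harm (x - z) + (if z < x then t / (real x - real z) else 0)"

lemma weight_P_sum:
  assumes "1 \<le> z" "z \<le> x"
  shows "(\<Sum>y\<in>{y\<in>{1..x-1}. y \<le> z}. (if z = y then t else 1) / (real x - real y)) = weight_P t x z"
proof (cases "z < x")
  case True
  have set: "{y\<in>{1..x-1}. y \<le> z} = insert z {1..z-1}" using True assms by auto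
  have "(\<Sum>y\<in>{y\<in>{1..x-1}. y \<le> z}. (if z = y then t else 1) / (real x - real y))
      = t / (real x - real z) + (\<Sum>y=1..z-1. (if z = y then t else 1) / (real x - real y))"
    unfolding set by (subst sum.insert) auto
  also have "(\<Sum>y=1..z-1. (if z = y then t else 1) / (real x - real y))
      = (\<Sum>y=1..z-1. 1 / (real x - real y))"
    by (intro sum.cong) auto
  finally show ?thesis using sum_inverse_gaps[OF assms] True by (simp add: weight_P_def)
next
  case False
  then have zx: "z = x" using assms by auto
  have set: "{y\<in>{1..x-1}. y \<le> z} = {1..z-1}" using zx by auto
  have "(\<Sum>y\<in>{y\<in>{1..x-1}. y \<le> z}. (if z = y then t else 1) / (real x - real y))
      = (\<Sum>y=1..z-1. 1 / (real x - real y))"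
    unfolding set by (intro sum.cong) auto
  then show ?thesis using sum_inverse_gaps[OF assms] False by (simp add: weight_P_def)
qed



section \<open>The connector sums\<close>

text \<open>For an index c = (a, m) with 0 <= t <= 1 (in \<open>ennreal\<close>, so always defined):
  \<open>block_A\<close> is the inner sum of the left-hand side of the theorem,
  \<open>conn_P\<close> attaches to the chain c a further point y < x weighted by 1/(x - y),
  \<open>conn_Q\<close> does the same for the index (1, m, a - 1), and \<open>conn_R\<close> is what appears
  when \<open>conn_Q\<close> is re-expanded along the rotated index.\<close>

definition block_A :: "real \<Rightarrow> nat list \<Rightarrow> ennreal" where
  "block_A t c = (\<Sum>j=1..hd c - 1. pos_sum (chain_sum t ((hd c + 1 - j) # tl c @ [j])))"

definition conn_P :: "real \<Rightarrow> nat list \<Rightarrow> ennreal" where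
  "conn_P t c = pos_sum (\<lambda>x. \<Sum>y=1..x-1. chain_kernel t (c @ [0]) x y / (real x - real y))"

definition conn_Q :: "real \<Rightarrow> nat list \<Rightarrow> ennreal" where
  "conn_Q t c =
     pos_sum (\<lambda>x. \<Sum>y=1..x-1. chain_kernel t (1 # tl c @ [hd c - 1]) x y / (real x - real y))"

definition conn_R :: "real \<Rightarrow> nat list \<Rightarrow> ennreal" where
  "conn_R t d = pos_sum (\<lambda>x. \<Sum>z=1..x. chain_kernel t d x z * (if z < x then 1 - t else 1) / real x)"

definition zeta_succ :: "nat \<Rightarrow> ennreal" where
  "zeta_succ k = pos_sum (\<lambda>x. 1 / real x ^ (k + 1))"

lemma sum_last:
  fixes x :: nat
  assumes "1 \<le> x"
  shows "(\<Sum>y=1..x. g y) = (\<Sum>y=1..x-1. g y) + (g x :: 'a::comm_monoid_add)"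
  using assms by (cases x) (auto simp: add.commute)

text \<open>Pointwise form of the first connector relation at fixed end points y < x: the
  exponents (b + 2 - j, j) at the two ends recombine by \<open>key_identity\<close>.\<close>
lemma kernel_partial_fractions:
  assumes "1 \<le> y" "y < x"
  shows "(\<Sum>j=1..b. chain_kernel t ((Suc b + 1 - j) # m @ [j]) x y)
           + chain_kernel t (Suc b # m @ [0]) x y / (real x - real y)
         = chain_kernel t (1 # m @ [b]) x y / (real x - real y)"
proof -
  define M where "M = chain_kernel t (0 # m @ [0]) x y"
  define S where "S = (\<Sum>j=1..b. 1 / real x ^ (Suc b + 1 - j) * (1 / real y ^ j))"
  have "(\<Sum>j=1..b. chain_kernel t ((Suc b + 1 - j) # m @ [j]) x y) = M * S"
    unfolding M_def S_def sum_distrib_left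
  proof (intro sum.cong refl)
    fix j
    show "chain_kernel t ((Suc b + 1 - j) # m @ [j]) x y = chain_kernel t (0 # m @ [0]) x y *
                (1 / real x ^ (Suc b + 1 - j) * (1 / real y ^ j))"
      using chain_kernel_ends[of t "Suc b + 1 - j" m j x y] by (simp only: mult_ac)
  qed
  moreover have "chain_kernel t (Suc b # m @ [0]) x y = M * (1 / real x ^ Suc b)"
    unfolding M_def using chain_kernel_ends[of t "Suc b" m 0 x y] by simp
  moreover have "chain_kernel t (1 # m @ [b]) x y = M * (1 / real x * (1 / real y ^ b))"
    unfolding M_def using chain_kernel_ends[of t 1 m b x y] by simp
  moreover have "M * (S + 1 / real x ^ Suc b / (real x - real y))
                 = M * (1 / real x * (1 / real y ^ b) / (real x - real y))"
    unfolding S_def key_identity[OF assms(2,1)] ..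
  ultimately show ?thesis by (simp only: distrib_left times_divide_eq_right)
qed

text \<open>Pointwise form of \<open>connector_A_P\<close> at a fixed first point x: the diagonal terms
  y = x of the chain sums produce the zeta value contribution.\<close>
lemma block_A_P_pointwise:
  assumes x: "1 \<le> x"
  shows "(\<Sum>j=1..b. chain_sum t ((Suc b + 1 - j) # m @ [j]) x)
           + (\<Sum>y=1..x-1. chain_kernel t (Suc b # m @ [0]) x y / (real x - real y))
         = (\<Sum>y=1..x-1. chain_kernel t (1 # m @ [b]) x y / (real x - real y))
           + real b * (t ^ Suc (length m) * (1 / real x ^ (sum_list (Suc b # m) + 1)))"
proof -
  define cj where "cj j = (Suc b + 1 - j) # m @ [j]" for j
  have diag: "chain_kernel t (cj j) x x = t ^ Suc (length m) * (1 / real x ^ (sum_list (Suc b # m) + 1))"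
    if "j \<in> {1..b}" for j
    using chain_kernel_diag[of "cj j" x t] x that unfolding cj_def by simp
  have "(\<Sum>j=1..b. chain_sum t (cj j) x)
      = (\<Sum>j=1..b. (\<Sum>y=1..x-1. chain_kernel t (cj j) x y) + chain_kernel t (cj j) x x)"
    unfolding chain_sum_def by (intro sum.cong refl sum_last[OF x])
  also have "\<dots> = (\<Sum>y=1..x-1. \<Sum>j=1..b. chain_kernel t (cj j) x y)
      + real b * (t ^ Suc (length m) * (1 / real x ^ (sum_list (Suc b # m) + 1)))"
    by (simp add: sum.distrib diag) (rule sum.swap)
  moreover have "(\<Sum>y=1..x-1. \<Sum>j=1..b. chain_kernel t (cj j) x y)
      + (\<Sum>y=1..x-1. chain_kernel t (Suc b # m @ [0]) x y / (real x - real y))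
      = (\<Sum>y=1..x-1. chain_kernel t (1 # m @ [b]) x y / (real x - real y))"
    unfolding sum.distrib[symmetric] cj_def
    by (intro sum.cong refl kernel_partial_fractions) auto
  ultimately show ?thesis unfolding cj_def by (simp only: add_ac)
qed

lemma connector_A_P:
  assumes "c \<noteq> []" "\<forall>y\<in>set c. 1 \<le> y" "0 \<le> t"
  shows "block_A t c + conn_P t c
         = conn_Q t c + of_nat (hd c - 1) * (ennreal (t ^ length c) * zeta_succ (sum_list c))"
proof -
  obtain b m where c: "c = Suc b # m"
    using assms(1,2) by (cases c; cases "hd c") auto
  have nn: "\<And>x y. y \<in> {1..x-1} \<Longrightarrow> 0 \<le> chain_kernel t cc x y / (real x - real y)" for cc
    using assms(3) by (auto intro!: divide_nonneg_nonneg chain_kernel_nonneg)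
  define f where "f x = (\<Sum>j=1..b. chain_sum t ((Suc b + 1 - j) # m @ [j]) x)" for x
  define p where "p x = (\<Sum>y=1..x-1. chain_kernel t (Suc b # m @ [0]) x y / (real x - real y))" for x
  define q where "q x = (\<Sum>y=1..x-1. chain_kernel t (1 # m @ [b]) x y / (real x - real y))" for x
  define D where "D x = real b * t ^ length c * (1 / real x ^ (sum_list c + 1))" for x
  have "block_A t c = pos_sum f"
    unfolding block_A_def f_def c list.sel diff_Suc_1 using assms(3)
    by (intro pos_sum_sum[symmetric]) (auto intro: chain_sum_nonneg)
  then have "block_A t c + conn_P t c = pos_sum f + pos_sum p"
    unfolding conn_P_def p_def c by simp
  also have "\<dots> = pos_sum (\<lambda>x. f x + p x)"
    using assms(3) unfolding f_def p_def
    by (intro pos_sum_add[symmetric]) (auto intro!: sum_nonneg chain_sum_nonneg nn)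
  also have "\<dots> = pos_sum (\<lambda>x. q x + D x)"
    unfolding f_def p_def q_def D_def c
    by (intro pos_sum_cong) (simp only: block_A_P_pointwise length_Cons mult.assoc)
  also have "\<dots> = pos_sum q + pos_sum D"
    using assms(3) unfolding q_def D_def by (intro pos_sum_add) (auto intro!: sum_nonneg nn)
  also have "pos_sum q = conn_Q t c" unfolding q_def conn_Q_def c by simp
  also have "pos_sum D = ennreal (real b * t ^ length c) * zeta_succ (sum_list c)"
    unfolding D_def zeta_succ_def using assms(3) by (subst pos_sum_cmult) auto
  finally show ?thesis
    using assms(3) by (simp add: c ennreal_mult ennreal_of_nat_eq_real_of_nat mult.assoc)
qed

lemma weight_P_nonneg: "0 \<le> t \<Longrightarrow> 1 \<le> z \<Longrightarrow> z \<le> x \<Longrightarrow> 0 \<le> weight_P t x z"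
  unfolding weight_P_def using harm_mono[of "x - z" "x - 1"] by auto

lemma weight_P_le_harm: "0 \<le> t \<Longrightarrow> t \<le> 1 \<Longrightarrow> 1 \<le> z \<Longrightarrow> z \<le> x \<Longrightarrow> weight_P t x z \<le> harm x"
proof -
  assume a: "0 \<le> t" "t \<le> 1" "1 \<le> z" "z \<le> x"
  have "(if z < x then t / (real x - real z) else 0) \<le> harm (x - z)"
  proof (cases "z < x")
    case True
    have "t / (real x - real z) \<le> 1 / (real x - real z)" using a True by (intro divide_right_mono) auto
    also have "\<dots> \<le> 1" using True by (auto simp: field_simps)
    also have "1 \<le> (harm (x - z) :: real)" using True by (intro harm_ge1) auto
    finally show ?thesis using True by simp
  qed (simp add: harm_nonneg)
  then have "weight_P t x z \<le> harm (x - 1)" unfolding weight_P_def by simp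
  also have "\<dots> \<le> harm x" by (intro harm_mono) auto
  finally show ?thesis .
qed

lemma conn_P_expand:
  assumes "d \<noteq> []"
  shows "conn_P t d = pos_sum (\<lambda>x. \<Sum>z=1..x. chain_kernel t d x z * weight_P t x z)"
  unfolding conn_P_def
proof (rule pos_sum_cong)
  fix x :: nat assume x: "1 \<le> x"
  define f where "f y z = (if z = y then t else 1) * chain_kernel t d x z / (real x - real y)" for y z
  have "(\<Sum>y=1..x-1. chain_kernel t (d @ [0]) x y / (real x - real y))
      = (\<Sum>y\<in>{1..x-1}. \<Sum>z\<in>{z\<in>{1..x}. y \<le> z}. f y z)"
  proof (rule sum.cong[OF refl])
    fix y assume y: "y \<in> {1..x-1}"
    then have "{z\<in>{1..x}. y \<le> z} = {y..x}" by auto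
    then show "chain_kernel t (d @ [0]) x y / (real x - real y) = (\<Sum>z\<in>{z\<in>{1..x}. y \<le> z}. f y z)"
      unfolding f_def using chain_kernel_snoc_zero[OF assms, of y t x] y by (simp add: sum_divide_distrib)
  qed
  also have "\<dots> = (\<Sum>z\<in>{1..x}. \<Sum>y\<in>{y\<in>{1..x-1}. y \<le> z}. f y z)"
    by (rule sum.swap_restrict) auto
  also have "\<dots> = (\<Sum>z=1..x. chain_kernel t d x z * weight_P t x z)"
  proof (rule sum.cong[OF refl])
    fix z assume z: "z \<in> {1..x}"
    have "(\<Sum>y\<in>{y\<in>{1..x-1}. y \<le> z}. f y z)
        = chain_kernel t d x z * (\<Sum>y\<in>{y\<in>{1..x-1}. y \<le> z}. (if z = y then t else 1) / (real x - real y))"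
      unfolding f_def sum_distrib_left by (intro sum.cong refl) (simp add: field_simps)
    then show "(\<Sum>y\<in>{y\<in>{1..x-1}. y \<le> z}. f y z) = chain_kernel t d x z * weight_P t x z"
      using weight_P_sum z by simp
  qed
  finally show "(\<Sum>y=1..x-1. chain_kernel t (d @ [0]) x y / (real x - real y))
      = (\<Sum>z=1..x. chain_kernel t d x z * weight_P t x z)" .
qed

text \<open>If the first entry is at least 2, the connector sum \<open>conn_P\<close> is finite:
  its terms are bounded by \<open>H\<^sub>x\<^sup>n / x\<^sup>2\<close>.\<close>
lemma connector_P_finite_base:
  assumes "c \<noteq> []" "2 \<le> hd c" "\<forall>y\<in>set c. 1 \<le> y" "0 \<le> t" "t \<le> 1"
  shows "conn_P t c < top"
  unfolding conn_P_expand[OF assms(1)]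
proof (rule pos_sum_finite)
  show "summable (\<lambda>i. harm (Suc i) ^ length c / real (Suc i) ^ 2)" by (rule summable_harm_power)
next
  fix x :: nat assume x: "1 \<le> x"
  show "0 \<le> harm x ^ length c / real x ^ 2"
    by (intro divide_nonneg_nonneg zero_le_power harm_nonneg) auto
  have tl: "\<forall>y\<in>set (tl c). 1 \<le> y" using assms(1,3) by (cases c) auto
  have "(\<Sum>z=1..x. chain_kernel t c x z * weight_P t x z) \<le> (\<Sum>z=1..x. chain_kernel t c x z * harm x)"
    using assms(4,5) by (intro sum_mono mult_left_mono weight_P_le_harm chain_kernel_nonneg) auto
  also have "\<dots> = harm x * chain_sum t c x"
    unfolding chain_sum_def by (simp add: sum_distrib_left mult.commute)
  also have "\<dots> \<le> harm x * (harm x ^ (length c - 1) / real x ^ hd c)"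
    using chain_sum_le_harm[OF assms(1,4,5) tl x] by (intro mult_left_mono harm_nonneg) auto
  also have "\<dots> \<le> harm x * (harm x ^ (length c - 1) / real x ^ 2)"
    using x assms(2) by (intro mult_left_mono divide_left_mono power_increasing)
      (auto intro!: zero_le_power harm_nonneg)
  also have "\<dots> = harm x ^ length c / real x ^ 2"
    using assms(1) by (cases c) auto
  finally show "(\<Sum>z=1..x. chain_kernel t c x z * weight_P t x z) \<le> harm x ^ length c / real x ^ 2" .
qed

text \<open>Third connector relation: \<open>R(d) = (1 - t) \<zeta>\<^sup>t(d\<^sub>1 + 1, d\<^sub>2, ...) + t\<^sup>n \<zeta>(k + 1)\<close>, the second
  term coming from the constant chains.\<close>
lemma connector_R:
  assumes "d \<noteq> []" "0 \<le> t" "t \<le> 1"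
  shows "conn_R t d = ennreal (1 - t) * pos_sum (chain_sum t ((hd d + 1) # tl d))
                      + ennreal (t ^ length d) * zeta_succ (sum_list d)"
proof -
  define G where "G = chain_sum t ((hd d + 1) # tl d)"
  define Z where "Z x = 1 / real x ^ (sum_list d + 1)" for x :: nat
  have pw: "(\<Sum>z=1..x. chain_kernel t d x z * (if z < x then 1 - t else 1) / real x)
      = (1 - t) * G x + t ^ length d * Z x" if x: "1 \<le> x" for x
  proof -
    have "(\<Sum>z=1..x. chain_kernel t d x z * (if z < x then 1 - t else 1) / real x)
        = (\<Sum>z=1..x. (1 - t) * (chain_kernel t d x z / real x)
                      + (if z = x then t * chain_kernel t d x z / real x else 0))"
      by (intro sum.cong) (auto simp: field_simps)
    also have "\<dots> = (1 - t) * (chain_sum t d x / real x) + t * chain_kernel t d x x / real x"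
      using x by (simp add: sum.distrib chain_sum_def
                      flip: sum_distrib_left sum_divide_distrib)
    also have "chain_sum t d x / real x = G x"
      using chain_sum_add_first[of t 1 "hd d" "tl d" x] assms(1) unfolding G_def by simp
    also have "t * chain_kernel t d x x / real x = t ^ length d * Z x"
      using chain_kernel_diag[OF assms(1) x, of t] assms(1) unfolding Z_def
      by (cases "length d") (auto simp: field_simps)
    finally show ?thesis .
  qed
  have "conn_R t d = pos_sum (\<lambda>x. (1 - t) * G x + t ^ length d * Z x)"
    unfolding conn_R_def by (rule pos_sum_cong) (rule pw)
  also have "\<dots> = pos_sum (\<lambda>x. (1 - t) * G x) + pos_sum (\<lambda>x. t ^ length d * Z x)"
    using assms unfolding G_def Z_def by (intro pos_sum_add)
      (auto intro!: mult_nonneg_nonneg chain_sum_nonneg)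
  also have "pos_sum (\<lambda>x. (1 - t) * G x) = ennreal (1 - t) * pos_sum G"
    using assms unfolding G_def by (intro pos_sum_cmult) (auto intro: chain_sum_nonneg)
  also have "pos_sum (\<lambda>x. t ^ length d * Z x) = ennreal (t ^ length d) * zeta_succ (sum_list d)"
    using assms unfolding Z_def zeta_succ_def by (intro pos_sum_cmult) auto
  finally show ?thesis unfolding G_def .
qed

text \<open>The weight produced by summing out the extra point of \<open>conn_Q\<close>; it differs
  from \<open>weight_P\<close> exactly by the weight of \<open>conn_R\<close> (lemma \<open>weight_Q_eq\<close>).\<close>
definition weight_Q :: "real \<Rightarrow> nat \<Rightarrow> nat \<Rightarrow> real" where
  "weight_Q t z y
      = harm z - harm (z - y) + (if y < z then t * real y / (real z * (real z - real y)) else 0)"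

lemma weight_Q_eq:
  assumes "1 \<le> y" "y \<le> z"
  shows "weight_Q t z y = weight_P t z y + (if y < z then 1 - t else 1) / real z"
proof -
  have hz: "harm z = harm (z - 1) + 1 / real z"
  proof -
    obtain n where n: "z = Suc n" using assms by (cases z) auto
    show ?thesis unfolding n by (simp add: harm_Suc divide_inverse)
  qed
  show ?thesis
  proof (cases "y < z")
    case True
    have zy: "0 < real z - real y" "0 < real z" using True by auto
    have "t * real y / (real z * (real z - real y)) = t / (real z - real y) - t / real z"
      using zy by (simp add: field_simps)
    then show ?thesis unfolding weight_Q_def weight_P_def hz using True by (simp add: diff_divide_distrib)
  next
    case False
    then show ?thesis unfolding weight_Q_def weight_P_def hz by simp
  qed
qed

text \<open>\<open>conn_Q_term t ms x z\<close>: the part of the \<open>conn_Q\<close> summand with first point x and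
  second point z of the chain (first entry 1, remaining entries ms).\<close>
definition conn_Q_term :: "real \<Rightarrow> nat list \<Rightarrow> nat \<Rightarrow> nat \<Rightarrow> real" where
  "conn_Q_term t ms x z = (\<Sum>y=1..z. if y < x
     then (if z = x then t else 1) * chain_kernel t ms z y / (real x * (real x - real y)) else 0)"

lemma conn_Q_term_nonneg: "0 \<le> t \<Longrightarrow> 0 \<le> conn_Q_term t ms x z"
  unfolding conn_Q_term_def
  by (auto intro!: sum_nonneg divide_nonneg_nonneg mult_nonneg_nonneg chain_kernel_nonneg)

lemma conn_Q_inner:
  assumes "1 \<le> x" "ms \<noteq> []"
  shows "(\<Sum>y=1..x-1. chain_kernel t (1 # ms) x y / (real x - real y))
       = (\<Sum>z=1..x. conn_Q_term t ms x z)"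
proof -
  define h where "h z y
      = (if z = x then t else 1) * chain_kernel t ms z y / (real x * (real x - real y))"
    for z y
  have "(\<Sum>y=1..x-1. chain_kernel t (1 # ms) x y / (real x - real y)) = (\<Sum>z=1..x. \<Sum>y=1..x-1. h z y)"
    using assms(2) unfolding h_def
    by (simp add: chain_kernel_Cons sum_distrib_left sum_divide_distrib) (rule sum.swap)
  also have "\<dots> = (\<Sum>z=1..x. conn_Q_term t ms x z)"
  proof (rule sum.cong[OF refl])
    fix z assume z: "z \<in> {1..x}"
    have "{y\<in>{1..x}. y < x} = {1..x-1}" using assms(1) by auto
    then have "(\<Sum>y=1..x-1. h z y) = (\<Sum>y=1..x. if y < x then h z y else 0)"
      by (metis sum.inter_filter finite_atLeastAtMost)
    also have "\<dots> = (\<Sum>y=1..z. if y < x then h z y else 0)"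
      using z by (intro sum.mono_neutral_right) (auto simp: h_def chain_kernel_below)
    finally show "(\<Sum>y=1..x-1. h z y) = conn_Q_term t ms x z"
      unfolding conn_Q_term_def h_def .
  qed
  finally show ?thesis .
qed

lemma pos_sum_triangle:
  assumes "\<And>x z. 1 \<le> z \<Longrightarrow> z \<le> x \<Longrightarrow> 0 \<le> F x z"
  shows "pos_sum (\<lambda>x. \<Sum>z=1..x. F x z) = (\<Sum>j. \<Sum>i. ennreal (F (Suc j + i) (Suc j)))"
proof -
  have "pos_sum (\<lambda>x. \<Sum>z=1..x. F x z) = (\<Sum>i. \<Sum>j\<le>i. ennreal (F (Suc i) (Suc j)))"
    unfolding pos_sum_def
  proof (rule arg_cong[where f=suminf], rule ext)
    fix i
    have "(\<Sum>z=1..Suc i. F (Suc i) z) = (\<Sum>j\<le>i. F (Suc i) (Suc j))"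
      by (simp only: sum.atLeast1_atMost_eq lessThan_Suc_atMost One_nat_def)
    then have "ennreal (\<Sum>z=1..Suc i. F (Suc i) z) = ennreal (\<Sum>j\<le>i. F (Suc i) (Suc j))" by simp
    also have "\<dots> = (\<Sum>j\<le>i. ennreal (F (Suc i) (Suc j)))"
      by (rule sum_ennreal[symmetric]) (use assms in auto)
    finally show "ennreal (\<Sum>z=1..Suc i. F (Suc i) z) = (\<Sum>j\<le>i. ennreal (F (Suc i) (Suc j)))" .
  qed
  also have "\<dots> = (\<Sum>j. \<Sum>i. ennreal (F (Suc (i + j)) (Suc j)))"
    by (rule suminf_triangle_swap)
  finally show ?thesis by (simp add: add.commute)
qed

text \<open>For a fixed second point z, the sum over all first points x >= z: the term x = z
  carries the weight t, the terms x > z telescope by \<open>telescope_harm\<close>, and the last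
  exponent of ms is raised by one.\<close>
lemma conn_Q_column:
  assumes z: "1 \<le> z"
  shows "(\<lambda>i. conn_Q_term t (m @ [e]) (z + i) z)
           sums (\<Sum>y=1..z. chain_kernel t (m @ [Suc e]) z y * weight_Q t z y)"
proof -
  define K where "K y = chain_kernel t (m @ [e]) z y" for y
  have "(\<lambda>i. \<Sum>y=1..z. K y * (1 / (real (z + Suc i) * (real (z + Suc i) - real y))))
          sums (\<Sum>y=1..z. K y * ((harm z - harm (z - y)) / real y))"
    by (intro sums_sum sums_mult telescope_harm) auto
  moreover have "conn_Q_term t (m @ [e]) (z + Suc i) z
      = (\<Sum>y=1..z. K y * (1 / (real (z + Suc i) * (real (z + Suc i) - real y))))" for i
    unfolding conn_Q_term_def K_def by (intro sum.cong) auto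
  ultimately have "(\<lambda>i. conn_Q_term t (m @ [e]) (z + i) z)
      sums ((\<Sum>y=1..z. K y * ((harm z - harm (z - y)) / real y)) + conn_Q_term t (m @ [e]) z z)"
    using sums_Suc[of "\<lambda>i. conn_Q_term t (m @ [e]) (z + i) z"] by simp
  moreover have "(\<Sum>y=1..z. K y * ((harm z - harm (z - y)) / real y)) + conn_Q_term t (m @ [e]) z z
      = (\<Sum>y=1..z. chain_kernel t (m @ [Suc e]) z y * weight_Q t z y)"
    unfolding conn_Q_term_def sum.distrib[symmetric]
  proof (intro sum.cong refl)
    fix y assume y: "y \<in> {1..z}"
    have "chain_kernel t (m @ [Suc e]) z y
        = 1 / real y * (1 / real y ^ e * chain_kernel t (m @ [0]) z y)"
      using chain_kernel_last[of t m "Suc e" z y] by simp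
    also have "\<dots> = K y / real y"
      unfolding K_def chain_kernel_last[of t m e z y] by simp
    finally have K_Suc: "chain_kernel t (m @ [Suc e]) z y = K y / real y" .
    show "K y * ((harm z - harm (z - y)) / real y) + (if y < z then (if z = z then t else 1)
        * chain_kernel t (m @ [e]) z y / (real z * (real z - real y)) else 0)
        = chain_kernel t (m @ [Suc e]) z y * weight_Q t z y"
      using y unfolding K_Suc weight_Q_def K_def by (auto simp: field_simps)
  qed
  ultimately show ?thesis by simp
qed

lemma conn_Q_expand:
  assumes "c \<noteq> []" "\<forall>y\<in>set c. 1 \<le> y" "0 \<le> t"
  shows "conn_Q t c = pos_sum (\<lambda>z. \<Sum>y=1..z. chain_kernel t (rotate1 c) z y * weight_Q t z y)"
proof -
  obtain e m where c: "c = Suc e # m"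
    using assms(1,2) by (cases c; cases "hd c") auto
  have "conn_Q t c = pos_sum (\<lambda>x. \<Sum>z=1..x. conn_Q_term t (m @ [e]) x z)"
    unfolding conn_Q_def c list.sel diff_Suc_1 by (intro pos_sum_cong conn_Q_inner) auto
  also have "\<dots> = (\<Sum>j. \<Sum>i. ennreal (conn_Q_term t (m @ [e]) (Suc j + i) (Suc j)))"
    using assms(3) by (intro pos_sum_triangle conn_Q_term_nonneg)
  also have "\<dots> = (\<Sum>j. ennreal (\<Sum>y=1..Suc j. chain_kernel t (m @ [Suc e]) (Suc j) y
                                                 * weight_Q t (Suc j) y))"
    using conn_Q_column[of "Suc _" t m e] conn_Q_term_nonneg[OF assms(3)]
    by (simp add: suminf_ennreal2 sums_iff)
  finally show ?thesis unfolding pos_sum_def c by simp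
qed

lemma connector_Q:
  assumes "c \<noteq> []" "\<forall>y\<in>set c. 1 \<le> y" "0 \<le> t" "t \<le> 1"
  shows "conn_Q t c = conn_P t (rotate1 c) + conn_R t (rotate1 c)"
proof -
  define d where "d = rotate1 c"
  define P where "P z = (\<Sum>y=1..z. chain_kernel t d z y * weight_P t z y)" for z
  define R where "R z = (\<Sum>y=1..z. chain_kernel t d z y * (if y < z then 1 - t else 1) / real z)" for z
  have "conn_Q t c = pos_sum (\<lambda>z. \<Sum>y=1..z. chain_kernel t d z y * weight_Q t z y)"
    unfolding d_def by (rule conn_Q_expand[OF assms(1,2,3)])
  also have "\<dots> = pos_sum (\<lambda>z. P z + R z)"
    unfolding P_def R_def sum.distrib[symmetric]
    by (intro pos_sum_cong sum.cong refl) (auto simp: weight_Q_eq distrib_left)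
  also have "\<dots> = pos_sum P + pos_sum R"
    using assms(3,4) unfolding P_def R_def
    by (intro pos_sum_add) (auto intro!: sum_nonneg mult_nonneg_nonneg divide_nonneg_nonneg
                                         chain_kernel_nonneg weight_P_nonneg)
  also have "\<dots> = conn_P t d + conn_R t d"
    using assms(1) unfolding P_def R_def d_def by (simp add: conn_P_expand conn_R_def)
  finally show ?thesis unfolding d_def .
qed

section \<open>Summation over all rotations\<close>

lemma zeta_succ_eq_mzv: "1 \<le> k \<Longrightarrow> zeta_succ k = ennreal (mzv [k + 1])"
  unfolding zeta_succ_def using mzv_as_pos_sum[of "[k + 1]"]
  by (simp add: chain_sum_single cong: pos_sum_cong)

lemma sum_list_rotate1: "sum_list (rotate1 xs) = sum_list (xs :: 'a::comm_monoid_add list)"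
  by (cases xs) (simp_all add: add.commute)

lemma sum_list_rotate: "sum_list (rotate l xs) = sum_list (xs :: 'a::comm_monoid_add list)"
  by (induction l) (simp_all add: sum_list_rotate1)

lemma bump_first_admissible:
  fixes d :: "nat list"
  assumes "d \<noteq> []" "\<forall>y\<in>set d. 1 \<le> y"
  shows "2 \<le> hd ((hd d + 1) # tl d)" "\<forall>y\<in>set ((hd d + 1) # tl d). 1 \<le> y"
  using assms hd_in_set[OF assms(1)] list.set_sel(2)[OF assms(1)] by auto

lemma connector_step:
  assumes "c \<noteq> []" "\<forall>y\<in>set c. 1 \<le> y" "0 \<le> t" "t \<le> 1"
  shows "block_A t c + conn_P t c = conn_P t (rotate1 c)
           + ennreal (1 - t) * pos_sum (chain_sum t ((hd (rotate1 c) + 1) # tl (rotate1 c)))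
           + of_nat (hd c) * (ennreal (t ^ length c) * zeta_succ (sum_list c))"
proof -
  define X where "X = ennreal (t ^ length c) * zeta_succ (sum_list c)"
  have hd_pos: "hd c = Suc (hd c - 1)" using assms(1,2) by (cases c) auto
  have "block_A t c + conn_P t c = conn_Q t c + of_nat (hd c - 1) * X"
    unfolding X_def by (rule connector_A_P[OF assms(1-3)])
  also have "conn_Q t c = conn_P t (rotate1 c) + conn_R t (rotate1 c)"
    by (rule connector_Q[OF assms])
  also have "conn_R t (rotate1 c) = ennreal (1 - t) *
      pos_sum (chain_sum t ((hd (rotate1 c) + 1) # tl (rotate1 c))) + X"
    unfolding X_def using connector_R[of "rotate1 c" t] assms by (simp add: sum_list_rotate1)
  finally have "block_A t c + conn_P t c = conn_P t (rotate1 c)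
      + (ennreal (1 - t) * pos_sum (chain_sum t ((hd (rotate1 c) + 1) # tl (rotate1 c))) + X)
      + of_nat (hd c - 1) * X" .
  moreover have hd_X: "of_nat (hd c - 1) * X + X = of_nat (hd c) * X"
    by (subst (2) hd_pos) (simp only: of_nat_Suc distrib_right mult_1 add.commute)
  ultimately show ?thesis
    unfolding X_def[symmetric] hd_X[symmetric] by (simp only: add_ac)
qed

lemma rotation_with_large_head:
  fixes c :: "nat list"
  assumes "c \<noteq> []" "\<forall>y\<in>set c. 1 \<le> y" "\<exists>y\<in>set c. y \<noteq> 1"
  shows "\<exists>m. 2 \<le> hd (rotate m c)"
proof -
  obtain j where j: "j < length c" "c ! j \<noteq> 1" using assms(3) by (auto simp: in_set_conv_nth)
  moreover have "1 \<le> c ! j" using assms(2) nth_mem[OF j(1)] by blast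
  moreover have "hd (rotate j c) = c ! j" using assms(1) j(1) by (simp add: hd_rotate_conv_nth)
  ultimately have "2 \<le> hd (rotate j c)" by simp
  then show ?thesis ..
qed

text \<open>The connector sum \<open>conn_P\<close> is finite as soon as some entry exceeds 1: rotating
  past the entries equal to 1 (for which \<open>block_A\<close> vanishes) leads to the finite case
  \<open>connector_P_finite_base\<close>, and each rotation step only adds finite terms.\<close>
lemma connector_P_finite:
  assumes "c \<noteq> []" "\<forall>y\<in>set c. 1 \<le> y" "\<exists>y\<in>set c. y \<noteq> 1" "0 \<le> t" "t \<le> 1"
  shows "conn_P t c < top"
proof -
  obtain m where m: "2 \<le> hd (rotate m c)"
    using rotation_with_large_head[OF assms(1-3)] by blast
  show ?thesis
    using assms(1,2) m
  proof (induction m arbitrary: c)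
    case 0
    then show ?case using connector_P_finite_base assms(4,5) by simp
  next
    case (Suc m)
    show ?case
    proof (cases "hd c = 1")
      case False
      then have "2 \<le> hd c" using Suc.prems(1,2) by (cases c) auto
      then show ?thesis using connector_P_finite_base Suc.prems(1,2) assms(4,5) by blast
    next
      case True
      have ksum: "1 \<le> sum_list c"
        using Suc.prems(1,2) by (cases c) auto
      have Z_fin: "pos_sum (chain_sum t ((hd (rotate1 c) + 1) # tl (rotate1 c))) < top"
        using bump_first_admissible[of "rotate1 c"] Suc.prems(1,2) assms(4,5)
        by (intro chain_sum_pos_sum_finite) auto
      have "conn_P t (rotate1 c) < top"
        using Suc.IH[of "rotate1 c"] Suc.prems by (simp add: rotate1_rotate_swap)
      moreover have "conn_P t c = conn_P t (rotate1 c)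
           + ennreal (1 - t) * pos_sum (chain_sum t ((hd (rotate1 c) + 1) # tl (rotate1 c)))
           + ennreal (t ^ length c) * zeta_succ (sum_list c)"
        using connector_step[OF Suc.prems(1,2) assms(4,5)] True by (simp add: block_A_def)
      ultimately show ?thesis
        using Z_fin zeta_succ_eq_mzv[OF ksum] by (simp add: ennreal_mult_less_top less_top)
    qed
  qed
qed

lemma sum_shift_cyclic:
  assumes "f n = (f 0 :: 'a::comm_monoid_add)"
  shows "(\<Sum>l<n. f (Suc l)) = (\<Sum>l<n. f l)"
proof (cases n)
  case (Suc m)
  have "(\<Sum>l<n. f (Suc l)) = (\<Sum>l<m. f (Suc l)) + f n" unfolding Suc by simp
  also have "\<dots> = f 0 + (\<Sum>l<m. f (Suc l))" using assms by (simp add: add.commute)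
  also have "\<dots> = (\<Sum>l<n. f l)" unfolding Suc by (simp only: sum.lessThan_Suc_shift)
  finally show ?thesis .
qed simp

text \<open>Summing \<open>connector_step\<close> over all rotations of ks: the \<open>conn_P\<close> terms and the
  bumped chain sums are permuted cyclically, and the \<open>conn_P\<close> terms cancel because
  they are finite.  The first entries of the rotations add up to the weight k.\<close>
lemma cyclic_sum_ennreal:
  assumes ks: "ks \<noteq> []" "\<forall>x\<in>set ks. 1 \<le> x" "\<exists>x\<in>set ks. x \<noteq> 1" and t: "0 \<le> t" "t \<le> 1"
  shows "(\<Sum>l<length ks. block_A t (rotate l ks))
       = ennreal (1 - t) * (\<Sum>l<length ks. pos_sum (chain_sum t ((ks ! l + 1) # tl (rotate l ks))))
         + of_nat (sum_list ks) * (ennreal (t ^ length ks) * zeta_succ (sum_list ks))"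
proof -
  define n where "n = length ks"
  define c where "c l = rotate l ks" for l
  define Z where "Z l = pos_sum (chain_sum t ((hd (c l) + 1) # tl (c l)))" for l
  define X where "X = ennreal (t ^ n) * zeta_succ (sum_list ks)"
  have c_ne: "c l \<noteq> []" and c_pos: "\<forall>y\<in>set (c l). 1 \<le> y" for l
    unfolding c_def using ks by auto
  have c_hd: "hd (c l) = ks ! l" if "l < n" for l
    using that ks(1) unfolding c_def n_def by (simp add: hd_rotate_conv_nth)
  have c_n: "c n = c 0" unfolding c_def n_def by simp
  have step: "block_A t (c l) + conn_P t (c l) = conn_P t (c (Suc l)) + ennreal (1 - t) * Z (Suc l)
      + of_nat (hd (c l)) * X" for l
    using connector_step[OF c_ne c_pos t, of l]
    unfolding Z_def X_def n_def by (simp add: c_def sum_list_rotate)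
  have P_fin: "(\<Sum>l<n. conn_P t (c l)) \<noteq> top"
    using connector_P_finite[OF c_ne c_pos _ t] ks(3) by (simp add: c_def ennreal_sum_eq_top less_top)
  have hd_sum: "(\<Sum>l<n. of_nat (hd (c l)) :: ennreal) = of_nat (sum_list ks)"
    using c_hd by (simp add: sum_list_sum_nth n_def atLeast0LessThan flip: of_nat_sum)
  have "(\<Sum>l<n. block_A t (c l)) + (\<Sum>l<n. conn_P t (c l))
      = (\<Sum>l<n. conn_P t (c (Suc l))) + ennreal (1 - t) * (\<Sum>l<n. Z (Suc l))
        + (\<Sum>l<n. of_nat (hd (c l))) * X"
    by (simp add: step sum.distrib sum_distrib_left sum_distrib_right flip: sum.distrib)
  also have "\<dots> = (\<Sum>l<n. conn_P t (c l)) + (ennreal (1 - t) * (\<Sum>l<n. Z l) + of_nat (sum_list ks) * X)"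
    using sum_shift_cyclic[of "\<lambda>l. conn_P t (c l)" n] sum_shift_cyclic[of Z n] c_n
    by (simp add: Z_def hd_sum add.assoc)
  finally have "(\<Sum>l<n. block_A t (c l)) = ennreal (1 - t) * (\<Sum>l<n. Z l) + of_nat (sum_list ks) * X"
    using P_fin by (simp add: add.commute ennreal_add_left_cancel)
  then show ?thesis
    unfolding Z_def X_def c_def n_def using c_hd unfolding c_def n_def by simp
qed

section \<open>Back to polynomials\<close>

lemma block_A_eq_poly:
  assumes "c \<noteq> []" "\<forall>y\<in>set c. 1 \<le> y" "0 \<le> t" "t \<le> 1"
  shows "block_A t c = ennreal (\<Sum>j=1..hd c - 1. poly (zeta_t ((hd c + 1 - j) # tl c @ [j])) t)"
proof -
  have "ennreal (poly (zeta_t ((hd c + 1 - j) # tl c @ [j])) t)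
          = pos_sum (chain_sum t ((hd c + 1 - j) # tl c @ [j]))" if "j \<in> {1..hd c - 1}" for j
    using that assms(1,2) list.set_sel(2)[OF assms(1)]
    by (intro zeta_t_as_pos_sum[OF _ _ _ assms(3,4)]) auto
  then show ?thesis
    unfolding block_A_def using poly_zeta_t_nonneg[OF assms(3)]
    by (subst sum_ennreal[symmetric]) auto
qed

lemma cyclic_sum_at:
  assumes ks: "ks \<noteq> []" "\<forall>x\<in>set ks. 1 \<le> x" "\<exists>x\<in>set ks. x \<noteq> 1" and t: "0 \<le> t" "t \<le> 1"
  defines "n \<equiv> length ks" and "k \<equiv> sum_list ks"
  shows "(\<Sum>l<n. \<Sum>j=1..ks ! l - 1. poly (zeta_t ((ks ! l + 1 - j) # tl (rotate l ks) @ [j])) t)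
       = (1 - t) * (\<Sum>l<n. poly (zeta_t ((ks ! l + 1) # tl (rotate l ks))) t)
         + real k * mzv [k + 1] * t ^ n"
    (is "?L = (1 - t) * ?S + ?Z")
proof -
  have rot: "rotate l ks \<noteq> []" "\<forall>y\<in>set (rotate l ks). 1 \<le> y" for l
    using ks by auto
  have hd_rot: "hd (rotate l ks) = ks ! l" if "l < n" for l
    using that ks(1) unfolding n_def by (simp add: hd_rotate_conv_nth)
  have bump: "ennreal (poly (zeta_t ((ks ! l + 1) # tl (rotate l ks))) t)
                = pos_sum (chain_sum t ((ks ! l + 1) # tl (rotate l ks)))" if "l < n" for l
    using bump_first_admissible[OF rot, of l] hd_rot[OF that]
    by (intro zeta_t_as_pos_sum[OF _ _ _ t]) auto
  have k1: "1 \<le> k"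
    using ks(2) member_le_sum_list[of "hd ks" ks] hd_in_set[OF ks(1)] unfolding k_def by fastforce
  have L_nonneg: "0 \<le> ?L" and S_nonneg: "0 \<le> ?S"
    using poly_zeta_t_nonneg[OF t(1)] by (auto intro!: sum_nonneg)
  have L_eq: "ennreal ?L = (\<Sum>l<n. block_A t (rotate l ks))"
    using block_A_eq_poly[OF rot t] hd_rot poly_zeta_t_nonneg[OF t(1)]
    by (subst sum_ennreal[symmetric]) (auto intro: sum_nonneg)
  have S_eq: "ennreal ?S = (\<Sum>l<n. pos_sum (chain_sum t ((ks ! l + 1) # tl (rotate l ks))))"
    using bump poly_zeta_t_nonneg[OF t(1)] by (subst sum_ennreal[symmetric]) auto
  have "ennreal ?L = ennreal (1 - t) * ennreal ?S + ennreal ?Z"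
    unfolding L_eq S_eq cyclic_sum_ennreal[OF ks t, folded n_def k_def] zeta_succ_eq_mzv[OF k1]
    using t mzv_nonneg[of "[k + 1]"]
    by (simp add: ennreal_mult ennreal_of_nat_eq_real_of_nat mult_ac)
  also have "\<dots> = ennreal ((1 - t) * ?S + ?Z)"
    using t S_nonneg mzv_nonneg[of "[k + 1]"] by (simp add: ennreal_mult ennreal_plus)
  finally have "ennreal ?L = ennreal ((1 - t) * ?S + ?Z)" .
  moreover have "0 \<le> (1 - t) * ?S + ?Z"
    using t S_nonneg mzv_nonneg[of "[k + 1]"] by (intro add_nonneg_nonneg mult_nonneg_nonneg) auto
  ultimately show ?thesis using L_nonneg by simp
qed

lemma poly_eq_on_unit_interval:
  fixes p q :: "real poly"
  assumes "\<And>t. 0 \<le> t \<Longrightarrow> t \<le> 1 \<Longrightarrow> poly p t = poly q t"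
  shows "p = q"
proof (rule ccontr)
  assume "p \<noteq> q"
  then have "finite {t. poly (p - q) t = 0}" by (intro poly_roots_finite) simp
  moreover have "{0..1::real} \<subseteq> {t. poly (p - q) t = 0}" using assms by auto
  ultimately have "finite {0..1::real}" by (rule finite_subset[rotated])
  then show False using infinite_Icc[of "0::real" 1] by simp
qed

theorem theorem5p5:
  fixes ks :: "nat list" and n k :: nat
  assumes "length ks = n" and "n \<ge> 1"
    and "\<forall>x\<in>set ks. x \<ge> 1" and "\<exists>x\<in>set ks. x \<noteq> 1"
    and "k = sum_list ks"
  shows "(\<Sum>l<n. \<Sum>j=1..ks ! l - 1. zeta_t ((ks ! l + 1 - j) # tl (rotate l ks) @ [j]))
       = [:1, -1:] * (\<Sum>l<n. zeta_t ((ks ! l + 1) # tl (rotate l ks)))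
         + monom (real k * mzv [k + 1]) n"
proof (rule poly_eq_on_unit_interval)
  fix t :: real
  assume "0 \<le> t" "t \<le> 1"
  moreover have "ks \<noteq> []" using assms(1,2) by auto
  ultimately show "poly (\<Sum>l<n. \<Sum>j=1..ks ! l - 1. zeta_t ((ks ! l + 1 - j) # tl (rotate l ks) @ [j])) t
      = poly ([:1, -1:] * (\<Sum>l<n. zeta_t ((ks ! l + 1) # tl (rotate l ks)))
          + monom (real k * mzv [k + 1]) n) t"
    using cyclic_sum_at[of ks t] assms
    by (simp add: poly_sum poly_monom left_diff_distrib)
qed

end
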